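(* Let $\alpha=2k+1\ge5$ be odd, $\varepsilon=e^{\pi i/(2\alpha)}$, $\zeta_j=\varepsilon^{2j-1}$ for $j=1,\dots,2\alpha$ (the roots of $z^{2\alpha}=-1$), and for $\mu>0$ let $A_\alpha(\mu)$ be the $2\alpha\times2\alpha$ matrix with $(r,j)$ entry $\zeta_j^{\,r-1}$ for $1\le r\le\alpha$ and $\zeta_j^{\,r-\alpha-1}e^{\mu\zeta_j}$ for $\alpha+1\le r\le 2\alpha$. Put $c_\ell=\cos\frac{\ell\pi}{2\alpha}$, $s_\ell=\sin\frac{\ell\pi}{2\alpha}$, $\sigma=2\sum_{j=1}^{k-2}c_{2j-1}$ (an empty sum being $0$), and $$\gamma_1=\sigma+2c_{2k-3}+2c_{2k-1},\quad \gamma_2=\sigma+2c_{2k-3}+c_{2k-1},\quad \gamma_3=\sigma+c_{2k-3}+2c_{2k-1}.$$ Then there are nonzero constants $K_1,K_2$ with $-K_2/K_1=2/\sin^2\frac{\pi}{2\alpha}$ such that, as $\mu\to+\infty$, $$\det A_\alpha(\mu)=K_1e^{\gamma_1\mu}\sin\mu+K_2e^{\gamma_2\mu}\sin(s_{2k-1}\mu)+O\big(e^{\gamma_3\mu}\big).$$ *)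

theory Defs
  imports "HOL-Analysis.Analysis" "HOL-Library.Landau_Symbols" "Jordan_Normal_Form.Determinant"
begin

definition eps_root :: "nat \<Rightarrow> complex" where
  "eps_root \<alpha> = exp (\<i> * of_real (pi / (2 * real \<alpha>)))"

definition zeta :: "nat \<Rightarrow> nat \<Rightarrow> complex" where
  "zeta \<alpha> j = eps_root \<alpha> ^ (2 * j - 1)"

(* A_alpha(mu), 2alpha x 2alpha; Isabelle indices are 0-based:
   entry (r,j) (0-based) is the paper's entry (r+1, j+1). *)
definition A_mat :: "nat \<Rightarrow> real \<Rightarrow> complex mat" where
  "A_mat \<alpha> \<mu> = mat (2 * \<alpha>) (2 * \<alpha>) (\<lambda>(r, j).
      if r < \<alpha> then zeta \<alpha> (j + 1) ^ r
      else zeta \<alpha> (j + 1) ^ (r - \<alpha>) * exp (of_real \<mu> * zeta \<alpha> (j + 1)))"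

definition cc :: "nat \<Rightarrow> nat \<Rightarrow> real" where
  "cc \<alpha> l = cos (real l * pi / (2 * real \<alpha>))"

definition ss :: "nat \<Rightarrow> nat \<Rightarrow> real" where
  "ss \<alpha> l = sin (real l * pi / (2 * real \<alpha>))"

definition sigma :: "nat \<Rightarrow> real" where
  "sigma k = 2 * (\<Sum>j = 1..k - 2. cc (2 * k + 1) (2 * j - 1))"

definition gamma1 :: "nat \<Rightarrow> real" where
  "gamma1 k = sigma k + 2 * cc (2*k+1) (2*k-3) + 2 * cc (2*k+1) (2*k-1)"
definition gamma2 :: "nat \<Rightarrow> real" where
  "gamma2 k = sigma k + 2 * cc (2*k+1) (2*k-3) + cc (2*k+1) (2*k-1)"
definition gamma3 :: "nat \<Rightarrow> real" where
  "gamma3 k = sigma k + cc (2*k+1) (2*k-3) + 2 * cc (2*k+1) (2*k-1)"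

end

theory Submission
  imports Defs
begin

(* Laplace expansion along the last alpha rows writes det A(mu) as a sum over
   alpha-sets T of columns of M(T) exp(mu s(T)), where s(T) is the sum of the roots in T and
   the minor M(T) is, up to sign, a product of two Vandermonde determinants; in particular it
   never vanishes.  Comparing M(T) with the minor of the set obtained by exchanging one column
   gives an explicit product of sines, which for the "arcs" of alpha cyclically consecutive
   roots, and for the sets obtained from them by moving an endpoint, collapses by telescoping.
   The real part of s(T) is maximal, equal to gamma1, exactly for the two arcs containing all
   roots with positive real part and one of i, -i; it equals gamma2 for four endpoint exchanges
   of these arcs, and is at most gamma3 otherwise.  The two arcs yield the sin mu term and the
   four exchanged sets the second term, with the ratio of their minors 1/sin^2 (pi/(2 alpha)). *)

section \<open>Laplace expansion along the lower half\<close>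

definition column_sets :: "nat \<Rightarrow> nat set set" where
  "column_sets n = {T. T \<subseteq> {0..<2*n} \<and> card T = n}"

lemma finite_column_sets: "finite (column_sets n)"
  unfolding column_sets_def by (rule finite_subset[of _ "Pow {0..<2*n}"]) auto

definition split_vandermonde :: "nat \<Rightarrow> (nat \<Rightarrow> 'a::comm_ring_1) \<Rightarrow> nat set \<Rightarrow> 'a mat" where
  "split_vandermonde n w T = mat (2*n) (2*n) (\<lambda>(r, j).
     if r < n then (if j \<in> T then 0 else w j ^ r)
     else (if j \<in> T then w j ^ (r - n) else 0))"

lemma split_vandermonde_carrier: "split_vandermonde n w T \<in> carrier_mat (2*n) (2*n)"
  unfolding split_vandermonde_def by simp

lemma permutes_image_upper_half:
  assumes "p permutes {0..<2*n}"
  shows "p ` {n..<2*n} \<subseteq> {0..<2*n}" "card (p ` {n..<2*n}) = n"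
  using assms by (auto simp: permutes_in_image card_image inj_on_subset[OF permutes_inj[OF assms]])

lemma prod_split_vandermonde:
  assumes p: "p permutes {0..<2*n}" and T: "T \<subseteq> {0..<2*n}" "card T = n"
  shows "(\<Prod>i = 0..<2*n. split_vandermonde n w T $$ (i, p i)) =
     (if p ` {n..<2*n} = T then (\<Prod>i = 0..<2*n. w (p i) ^ (if i < n then i else i - n)) else 0)"
proof (cases "p ` {n..<2*n} = T")
  case True
  have "split_vandermonde n w T $$ (i, p i) = w (p i) ^ (if i < n then i else i - n)"
    if i: "i \<in> {0..<2*n}" for i
  proof -
    have "p i \<in> T \<longleftrightarrow> n \<le> i"
      using i unfolding True[symmetric] by (auto simp: inj_image_mem_iff[OF permutes_inj[OF p]])
    then show ?thesis
      using i permutes_in_image[OF p, of i] by (simp add: split_vandermonde_def)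
  qed
  then show ?thesis using True by simp
next
  case False
  then have "\<not> p ` {n..<2*n} \<subseteq> T"
    using permutes_image_upper_half[OF p] T by (metis card_subset_eq finite_atLeastLessThan finite_subset)
  then obtain i where i: "i \<in> {n..<2*n}" "p i \<notin> T" by blast
  then have "split_vandermonde n w T $$ (i, p i) = 0"
    using permutes_in_image[OF p, of i] by (simp add: split_vandermonde_def)
  then have "(\<Prod>i = 0..<2*n. split_vandermonde n w T $$ (i, p i)) = 0"
    using i by (intro prod_zero[OF finite_atLeastLessThan] bexI[of _ i]) auto
  then show ?thesis using False by simp
qed

text \<open>The complementary minors of the generalised Laplace expansion along the last \<open>n\<close> rows
  combine into \<open>split_vandermonde n w T\<close>, where \<open>T\<close> is the set of columns used by the last rows.\<close>
lemma det_scaled_vandermonde_expansion: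
  fixes w e :: "nat \<Rightarrow> 'a::comm_ring_1"
  shows "det (mat (2*n) (2*n) (\<lambda>(r, j). if r < n then w j ^ r else w j ^ (r - n) * e j)) =
    (\<Sum>T\<in>column_sets n. det (split_vandermonde n w T) * (\<Prod>j\<in>T. e j))"
proof -
  let ?B = "mat (2*n) (2*n) (\<lambda>(r, j). if r < n then w j ^ r else w j ^ (r - n) * e j)"
  let ?P = "{p. p permutes {0..<2*n}}"
  let ?TS = "column_sets n"
  let ?V = "\<lambda>p. signof p * (\<Prod>i = 0..<2*n. w (p i) ^ (if i < n then i else i - n))"
  have prod_B: "signof p * (\<Prod>i = 0..<2*n. ?B $$ (i, p i)) = ?V p * (\<Prod>j \<in> p ` {n..<2*n}. e j)"
    if p: "p permutes {0..<2*n}" for p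
  proof -
    have "(\<Prod>i = 0..<2*n. ?B $$ (i, p i)) =
        (\<Prod>i = 0..<2*n. w (p i) ^ (if i < n then i else i - n) * (if i < n then 1 else e (p i)))"
      using permutes_in_image[OF p] by (intro prod.cong) auto
    also have "\<dots> = (\<Prod>i = 0..<2*n. w (p i) ^ (if i < n then i else i - n)) * (\<Prod>i\<in>{n..<2*n}. e (p i))"
      unfolding prod.distrib by (intro arg_cong2[where f="(*)"] refl prod.mono_neutral_cong_right) auto
    also have "(\<Prod>i\<in>{n..<2*n}. e (p i)) = (\<Prod>j \<in> p ` {n..<2*n}. e j)"
      by (simp add: prod.reindex inj_on_subset[OF permutes_inj[OF p]])
    finally show ?thesis by (simp add: mult.assoc)
  qed
  have det_T: "det (split_vandermonde n w T) = (\<Sum>p \<in> {p \<in> ?P. p ` {n..<2*n} = T}. ?V p)"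
    if "T \<in> ?TS" for T
  proof -
    have "det (split_vandermonde n w T) = (\<Sum>p\<in>?P. if p ` {n..<2*n} = T then ?V p else 0)"
      unfolding det_def'[OF split_vandermonde_carrier] using that
      by (intro sum.cong) (auto simp: prod_split_vandermonde column_sets_def)
    also have "\<dots> = (\<Sum>p \<in> {p \<in> ?P. p ` {n..<2*n} = T}. ?V p)"
      by (rule sum.inter_filter[symmetric]) (simp add: finite_permutations)
    finally show ?thesis .
  qed
  have "det ?B = (\<Sum>p\<in>?P. ?V p * (\<Prod>j \<in> p ` {n..<2*n}. e j))"
    unfolding det_def'[of ?B "2*n", OF mat_carrier] by (intro sum.cong refl prod_B) simp
  also have "\<dots> = (\<Sum>T\<in>?TS. \<Sum>p \<in> {p \<in> ?P. p ` {n..<2*n} = T}. ?V p * (\<Prod>j \<in> p ` {n..<2*n}. e j))"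
    by (rule sum.group[symmetric])
      (auto simp: finite_permutations column_sets_def finite_column_sets dest: permutes_image_upper_half)
  also have "\<dots> = (\<Sum>T\<in>?TS. det (split_vandermonde n w T) * (\<Prod>j\<in>T. e j))"
    by (intro sum.cong refl) (simp add: det_T sum_distrib_right)
  finally show ?thesis .
qed

section \<open>Minors of split Vandermonde matrices\<close>

lemma split_vandermonde_identical_columns:
  assumes "a < 2*n" "c < 2*n" "a \<noteq> c" "a \<in> T \<longleftrightarrow> c \<in> T" "w a = w c"
  shows "det (split_vandermonde n w T) = 0"
proof (rule det_identical_columns[OF split_vandermonde_carrier assms(3,1,2)])
  show "col (split_vandermonde n w T) a = col (split_vandermonde n w T) c"
    using assms by (intro eq_vecI) (auto simp: split_vandermonde_def)
qed

lemma det_split_vandermonde_column_poly: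
  assumes "c < 2*n"
  obtains C where "\<And>x. det (split_vandermonde n (w(c := x)) T) = (\<Sum>i<n. C i * x ^ i)"
proof
  define s where "s = (if c \<in> T then n else 0)"
  let ?M = "\<lambda>x. split_vandermonde n (w(c := x)) T"
  have cof: "cofactor (?M x) r c = cofactor (?M y) r c" for x y r
  proof -
    have "mat_delete (?M x) r c = mat_delete (?M y) r c"
      by (intro eq_matI) (auto simp: mat_delete_def split_vandermonde_def)
    then show ?thesis by (simp add: cofactor_def)
  qed
  have entry: "?M x $$ (r, c) = (if r \<in> {s..<s+n} then x ^ (r - s) else 0)" if "r < 2*n" for x r
    using that assms by (auto simp: split_vandermonde_def s_def)
  fix x
  have "det (?M x) = (\<Sum>r<2*n. ?M x $$ (r, c) * cofactor (?M 0) r c)"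
    unfolding cof[of 0 _ x] by (rule laplace_expansion_column[OF split_vandermonde_carrier assms])
  also have "\<dots> = (\<Sum>r\<in>{s..<s+n}. x ^ (r - s) * cofactor (?M 0) r c)"
    by (rule sum.mono_neutral_cong_right) (auto simp: entry s_def)
  also have "\<dots> = (\<Sum>i<n. cofactor (?M 0) (s + i) c * x ^ i)"
    by (rule sum.reindex_bij_witness[where i="\<lambda>i. s + i" and j="\<lambda>r. r - s"]) auto
  finally show "det (?M x) = (\<Sum>i<n. cofactor (?M 0) (s + i) c * x ^ i)" .
qed

lemma vandermonde_columns_independent:
  fixes w v :: "nat \<Rightarrow> 'a::idom"
  assumes X: "finite X" "inj_on w X" "card X \<le> m"
    and comb: "\<And>i. i < m \<Longrightarrow> (\<Sum>j\<in>X. w j ^ i * v j) = 0"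
    and j0: "j0 \<in> X"
  shows "v j0 = 0"
proof -
  define L where "L = (\<Prod>j\<in>X - {j0}. [:- w j, 1:])"
  have "degree L = card (X - {j0})"
    unfolding L_def by (subst degree_prod_eq_sum_degree) auto
  then have deg: "degree L < m"
    using X j0 by (metis card_Diff1_less le_trans not_le)
  have poly_L: "poly L x = (\<Prod>j\<in>X - {j0}. x - w j)" for x
    unfolding L_def by (simp add: poly_prod)
  have poly_sum: "poly L x = (\<Sum>i<m. coeff L i * x ^ i)" for x
    unfolding poly_altdef using deg
    by (intro sum.mono_neutral_left) (auto simp: coeff_eq_0)
  have "poly L (w j) = 0" if "j \<in> X - {j0}" for j
    unfolding poly_L using X(1) that by (intro prod_zero bexI[of _ j]) auto
  then have "(\<Sum>j\<in>X - {j0}. v j * poly L (w j)) = 0"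
    by (intro sum.neutral) simp
  then have "v j0 * poly L (w j0) = (\<Sum>j\<in>X. v j * poly L (w j))"
    using X(1) j0 by (simp add: sum.remove)
  also have "\<dots> = (\<Sum>i<m. coeff L i * (\<Sum>j\<in>X. w j ^ i * v j))"
    using poly_sum by (simp add: sum_distrib_left sum_distrib_right mult_ac sum.swap[of _ X])
  also have "\<dots> = 0"
    using comb by simp
  finally have "v j0 * poly L (w j0) = 0" .
  moreover have "poly L (w j0) \<noteq> 0"
    using X(1,2) j0 by (auto simp: poly_L inj_on_def)
  ultimately show ?thesis by simp
qed

lemma det_split_vandermonde_nonzero:
  fixes w :: "nat \<Rightarrow> 'a::idom"
  assumes inj: "inj_on w {0..<2*n}" and T: "T \<subseteq> {0..<2*n}" "card T = n"
  shows "det (split_vandermonde n w T) \<noteq> 0"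
proof
  assume "det (split_vandermonde n w T) = 0"
  then obtain v where v: "v \<in> carrier_vec (2*n)" "v \<noteq> 0\<^sub>v (2*n)"
      "split_vandermonde n w T *\<^sub>v v = 0\<^sub>v (2*n)"
    using det_0_iff_vec_prod_zero[OF split_vandermonde_carrier] by blast
  have row: "(\<Sum>j<2*n. split_vandermonde n w T $$ (r, j) * v $ j) = 0" if "r < 2*n" for r
  proof -
    have "(split_vandermonde n w T *\<^sub>v v) $ r = 0" using v(3) that by simp
    then show ?thesis
      using v(1) that by (simp add: scalar_prod_def lessThan_atLeast0 split_vandermonde_def)
  qed
  have top: "(\<Sum>j\<in>{0..<2*n} - T. w j ^ i * v $ j) = 0" if "i < n" for i
  proof -
    have "(\<Sum>j\<in>{0..<2*n} - T. w j ^ i * v $ j) = (\<Sum>j<2*n. split_vandermonde n w T $$ (i, j) * v $ j)"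
      using that by (intro sum.mono_neutral_cong_left) (auto simp: split_vandermonde_def)
    then show ?thesis using row[of i] that by simp
  qed
  have bottom: "(\<Sum>j\<in>T. w j ^ i * v $ j) = 0" if "i < n" for i
  proof -
    have "(\<Sum>j\<in>T. w j ^ i * v $ j) = (\<Sum>j<2*n. split_vandermonde n w T $$ (n + i, j) * v $ j)"
      using that T(1) by (intro sum.mono_neutral_cong_left) (auto simp: split_vandermonde_def)
    then show ?thesis using row[of "n + i"] that by simp
  qed
  have fin: "finite T" using T(1) finite_subset by blast
  have "v $ j = 0" if j: "j < 2*n" for j
  proof (cases "j \<in> T")
    case True
    show ?thesis
      by (rule vandermonde_columns_independent[OF fin inj_on_subset[OF inj T(1)] _ bottom True])
        (use T in auto)
  next
    case False
    have "card ({0..<2*n} - T) = n" using T fin by (simp add: card_Diff_subset)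
    then show ?thesis
      by (intro vandermonde_columns_independent[of "{0..<2*n} - T" w n _ j, OF _ _ _ top])
        (use False j inj in \<open>auto intro: inj_on_subset\<close>)
  qed
  then have "v = 0\<^sub>v (2*n)" using v(1) by (intro eq_vecI) auto
  then show False using v(2) by simp
qed

lemma power_sum_cross_mult:
  fixes C :: "nat \<Rightarrow> 'a::idom"
  assumes U: "finite U" "inj_on w U" "m \<le> card U + 1"
    and vanish: "\<And>u. u \<in> U \<Longrightarrow> (\<Sum>i<m. C i * w u ^ i) = 0"
  shows "(\<Sum>i<m. C i * x ^ i) * (\<Prod>u\<in>U. y - w u) = (\<Sum>i<m. C i * y ^ i) * (\<Prod>u\<in>U. x - w u)"
proof -
  define p where "p = (\<Sum>i<m. monom (C i) i)"
  have poly_p: "poly p z = (\<Sum>i<m. C i * z ^ i)" for z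
    by (simp add: p_def poly_sum poly_monom)
  have "degree p \<le> m - 1"
    unfolding p_def by (intro degree_sum_le) (auto intro: order.trans[OF degree_monom_le])
  then have deg_p: "degree p \<le> card U" using U(3) by simp
  define L where "L = (\<Prod>u\<in>U. [:- w u, 1:])"
  have poly_L: "poly L z = (\<Prod>u\<in>U. z - w u)" for z
    by (simp add: L_def poly_prod)
  have deg_L: "degree L = card U"
    unfolding L_def by (subst degree_prod_eq_sum_degree) auto
  show ?thesis
  proof (cases "y \<in> w ` U")
    case True
    then obtain u where "u \<in> U" "y = w u" by blast
    then show ?thesis using U(1) vanish by auto
  next
    case False
    have "Polynomial.smult (poly p y) L = Polynomial.smult (poly L y) p"
    proof (rule poly_eqI_degree)
      fix z assume "z \<in> insert y (w ` U)"
      then show "poly (Polynomial.smult (poly p y) L) z = poly (Polynomial.smult (poly L y) p) z"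
        using U(1) vanish by (auto simp: poly_L poly_p)
    next
      have "card (insert y (w ` U)) = card U + 1"
        using False U by (simp add: card_image)
      then show "degree (Polynomial.smult (poly p y) L) < card (insert y (w ` U))"
        using deg_L degree_smult_le[of "poly p y" L] by linarith
      show "degree (Polynomial.smult (poly L y) p) < card (insert y (w ` U))"
        using \<open>card (insert y (w ` U)) = card U + 1\<close> deg_p degree_smult_le[of "poly L y" p] by linarith
    qed
    from arg_cong[OF this, of "\<lambda>q. poly q x"] show ?thesis
      by (simp add: poly_L poly_p mult.commute)
  qed
qed

text \<open>Up to sign the determinant is the product of the Vandermonde determinants of \<open>w\<close> on
  \<open>T\<close> and on its complement.  Instead of tracking that sign, compare \<open>T\<close> with the set where
  \<open>b \<in> T\<close> is exchanged for \<open>a \<notin> T\<close>: as a polynomial in the entries of columns \<open>a\<close> and \<open>b\<close>,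
  the determinant vanishes at all other nodes of the same block.\<close>
lemma det_split_vandermonde_exchange:
  fixes w :: "nat \<Rightarrow> 'a::idom"
  assumes inj: "inj_on w {0..<2*n}" and T: "T \<subseteq> {0..<2*n}" "card T = n"
    and a: "a < 2*n" "a \<notin> T" and b: "b \<in> T"
  defines "R \<equiv> T - {b}" and "U \<equiv> {0..<2*n} - T - {a}"
  shows "- det (split_vandermonde n w (insert a R)) * (\<Prod>u\<in>U. w a - w u) * (\<Prod>r\<in>R. w b - w r)
       = det (split_vandermonde n w T) * (\<Prod>r\<in>R. w a - w r) * (\<Prod>u\<in>U. w b - w u)"
proof -
  define H where "H x y = det (split_vandermonde n (w(a := x, b := y)) T)" for x y
  have b2: "b < 2*n" and ab: "a \<noteq> b" using T a b by auto
  have fin: "finite T" using T(1) finite_subset by blast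
  have "card ({0..<2*n} - T) = n" using T fin by (simp add: card_Diff_subset)
  then have card_U: "card U = n - 1" using a by (simp add: U_def)
  have card_R: "card R = n - 1" using b fin T(2) by (simp add: R_def)
  have x_form: "H x y * (\<Prod>u\<in>U. x' - w u) = H x' y * (\<Prod>u\<in>U. x - w u)" for x x' y
  proof -
    obtain C where C: "\<And>x. det (split_vandermonde n ((w(b := y))(a := x)) T) = (\<Sum>i<n. C i * x ^ i)"
      using det_split_vandermonde_column_poly[OF a(1), where w="w(b := y)"] by blast
    have H: "H x y = (\<Sum>i<n. C i * x ^ i)" for x
      unfolding H_def fun_upd_twist[OF ab] by (rule C)
    have "(\<Sum>i<n. C i * w u ^ i) = 0" if "u \<in> U" for u
      using that a b ab unfolding H[symmetric] H_def U_def
      by (intro split_vandermonde_identical_columns[of a n u]) auto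
    then show ?thesis unfolding H
      by (intro power_sum_cross_mult) (use card_U inj in \<open>auto simp: U_def intro: inj_on_subset\<close>)
  qed
  have y_form: "H x y * (\<Prod>r\<in>R. y' - w r) = H x y' * (\<Prod>r\<in>R. y - w r)" for x y y'
  proof -
    obtain C where C: "\<And>y. det (split_vandermonde n ((w(a := x))(b := y)) T) = (\<Sum>i<n. C i * y ^ i)"
      using det_split_vandermonde_column_poly[OF b2, where w="w(a := x)"] by blast
    have H: "H x y = (\<Sum>i<n. C i * y ^ i)" for y
      by (simp add: H_def C)
    have "(\<Sum>i<n. C i * w r ^ i) = 0" if "r \<in> R" for r
      using that T(1) a b b2 ab unfolding H[symmetric] H_def R_def
      by (intro split_vandermonde_identical_columns[of b n r]) auto
    then show ?thesis unfolding H
      by (intro power_sum_cross_mult) (use card_R inj fin T(1) in \<open>auto simp: R_def intro: inj_on_subset\<close>)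
  qed
  have "split_vandermonde n w (insert a R) = swapcols a b (split_vandermonde n (w(a := w b, b := w a)) T)"
    using a b b2 ab by (intro eq_matI) (auto simp: split_vandermonde_def R_def)
  then have "det (split_vandermonde n w (insert a R)) = - H (w b) (w a)"
    unfolding H_def by (simp add: det_swapcols[OF a(1) b2 ab split_vandermonde_carrier])
  moreover have "det (split_vandermonde n w T) = H (w a) (w b)"
    by (simp add: H_def)
  moreover have "H (w b) (w a) * (\<Prod>u\<in>U. w a - w u) * (\<Prod>r\<in>R. w b - w r)
      = H (w a) (w b) * (\<Prod>r\<in>R. w a - w r) * (\<Prod>u\<in>U. w b - w u)"
    using x_form[of "w b" "w a" "w a"] y_form[of "w a" "w a" "w b"] by (simp add: mult_ac)
  ultimately show ?thesis by simp
qed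

section \<open>The roots of \<open>z\<^sup>2\<^sup>n = -1\<close>\<close>

definition zeta_int :: "nat \<Rightarrow> int \<Rightarrow> complex" where
  "zeta_int n j = cis ((2 * of_int j + 1) * pi / (2 * real n))"

definition eps_pow :: "nat \<Rightarrow> int \<Rightarrow> complex" where
  "eps_pow n m = cis (of_int m * pi / (2 * real n))"

definition ss_int :: "nat \<Rightarrow> int \<Rightarrow> real" where
  "ss_int n d = sin (of_int d * pi / (2 * real n))"

lemma zeta_conv_zeta_int: "zeta n (j + 1) = zeta_int n (int j)"
proof -
  have "eps_root n = cis (pi / (2 * real n))"
    by (simp add: eps_root_def cis_conv_exp mult.commute)
  moreover have "2 * (j + 1) - 1 = 2 * j + 1" by simp
  ultimately have "zeta n (j + 1) = cis (pi / (2 * real n)) ^ (2 * j + 1)"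
    unfolding zeta_def by (simp only:)
  also have "\<dots> = zeta_int n (int j)"
    unfolding Complex.DeMoivre zeta_int_def by (rule arg_cong[where f = cis]) (simp add: field_simps)
  finally show ?thesis .
qed

lemma zeta_eq_Complex: "zeta n (j + 1) = Complex (cc n (2 * j + 1)) (ss n (2 * j + 1))"
  unfolding zeta_conv_zeta_int zeta_int_def cc_def ss_def cis.code by (simp add: add.commute)

lemma zeta_int_add_period:
  assumes "n > 0"
  shows "zeta_int n (j + 2 * int n * q) = zeta_int n j"
proof -
  have "(2 * of_int (j + 2 * int n * q) + 1) * pi / (2 * real n) = (2 * of_int j + 1) * pi / (2 * real n) + 2 * pi * of_int q"
    using assms by (simp add: field_simps)
  then show ?thesis
    by (simp add: zeta_int_def cis_mult[symmetric])
qed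

lemma zeta_int_add_half_period:
  assumes "n > 0"
  shows "zeta_int n (j + int n) = - zeta_int n j"
proof -
  have "(2 * of_int (j + int n) + 1) * pi / (2 * real n) = (2 * of_int j + 1) * pi / (2 * real n) + pi"
    using assms by (simp add: field_simps)
  then show ?thesis
    by (simp add: zeta_int_def cis_mult[symmetric])
qed

lemma zeta_reflect:
  assumes "j < 2 * n"
  shows "zeta n (2 * n - 1 - j + 1) = cnj (zeta n (j + 1))"
proof -
  have "real (2 * (2 * n - 1 - j) + 1) * pi / (2 * real n) = 2 * pi - real (2 * j + 1) * pi / (2 * real n)"
    using assms by (simp add: of_nat_diff field_simps)
  then show ?thesis
    unfolding zeta_eq_Complex by (simp add: cc_def ss_def complex_eq_iff)
qed

lemma cis_diff: "cis A - cis B = 2 * \<i> * cis ((A + B) / 2) * of_real (sin ((A - B) / 2))"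
proof -
  have "cis A - cis B = cis ((A + B) / 2) * (cis ((A - B) / 2) - cis (- ((A - B) / 2)))"
    by (simp add: right_diff_distrib cis_mult add_divide_distrib diff_divide_distrib)
  also have "cis ((A - B) / 2) - cis (- ((A - B) / 2)) = 2 * \<i> * of_real (sin ((A - B) / 2))"
    by (simp add: complex_eq_iff)
  finally show ?thesis by (simp add: mult_ac)
qed

lemma zeta_int_diff:
  assumes "n > 0"
  shows "zeta_int n p - zeta_int n j = 2 * \<i> * eps_pow n (p + j + 1) * of_real (ss_int n (p - j))"
proof -
  have eq: "((2 * of_int p + 1) * pi / (2 * real n) + (2 * of_int j + 1) * pi / (2 * real n)) / 2
      = of_int (p + j + 1) * pi / (2 * real n)"
    using assms by (simp add: field_simps)
  have eq': "((2 * of_int p + 1) * pi / (2 * real n) - (2 * of_int j + 1) * pi / (2 * real n)) / 2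
      = of_int (p - j) * pi / (2 * real n)"
    using assms by (simp add: field_simps)
  show ?thesis
    unfolding zeta_int_def cis_diff eq eq' eps_pow_def ss_int_def by (rule refl)
qed

lemma eps_pow_add: "eps_pow n a * eps_pow n b = eps_pow n (a + b)"
  by (simp add: eps_pow_def cis_mult add_divide_distrib distrib_right)

lemma ss_int_nonzero:
  assumes "0 < \<bar>d\<bar>" "\<bar>d\<bar> < 2 * int n"
  shows "ss_int n d \<noteq> 0"
proof
  assume "ss_int n d = 0"
  then obtain i :: int where i: "of_int d * pi / (2 * real n) = of_int i * pi"
    unfolding ss_int_def sin_zero_iff_int2 by blast
  have "n > 0" using assms by auto
  then have "of_int d = (of_int (i * (2 * int n)) :: real)"
    using i by (simp add: field_simps)
  then have d: "d = i * (2 * int n)" by (simp only: of_int_eq_iff)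
  show False
  proof (cases "i = 0")
    case True
    then show False using assms d by simp
  next
    case False
    then have "1 * (2 * int n) \<le> \<bar>i\<bar> * (2 * int n)"
      by (intro mult_right_mono) auto
    moreover have "\<bar>d\<bar> = \<bar>i\<bar> * (2 * int n)"
      using d by (simp add: abs_mult)
    ultimately show False using assms(2) by linarith
  qed
qed

lemma ss_int_uminus: "ss_int n (- d) = - ss_int n d"
  by (simp add: ss_int_def)

lemma ss_int_values:
  assumes "n > 0"
  shows "ss_int n 1 = sin (pi / (2 * real n))" "ss_int n (- 1) = - sin (pi / (2 * real n))"
    "ss_int n (int n) = 1" "ss_int n (- int n) = - 1"
  using assms by (simp_all add: ss_int_def)

lemma sin_pi_div_pos: "n > 0 \<Longrightarrow> 0 < sin (pi / (2 * real n))"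
proof -
  assume n: "n > 0"
  have "pi / (2 * real n) \<le> pi / 2" using n by (intro divide_left_mono) auto
  moreover have "0 < pi / (2 * real n)" using n by simp
  ultimately show ?thesis using pi_gt_zero by (intro sin_gt_zero) linarith+
qed

lemma cc_antimono:
  assumes "n > 0" "l \<le> l'" "l' \<le> 2 * n"
  shows "cc n l' \<le> cc n l"
  unfolding cc_def using assms
  by (intro cos_monotone_0_pi_le) (auto simp: field_simps)

lemma cc_reflect: "l \<le> 2 * n \<Longrightarrow> n > 0 \<Longrightarrow> cc n (2 * n - l) = - cc n l"
proof -
  assume "l \<le> 2 * n" "n > 0"
  then have "real (2 * n - l) * pi / (2 * real n) = pi - real l * pi / (2 * real n)"
    by (simp add: of_nat_diff field_simps)
  then show ?thesis by (simp add: cc_def)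
qed

lemma inj_on_zeta:
  assumes "n > 0"
  shows "inj_on (\<lambda>j. zeta n (j + 1)) {0..<2*n}"
proof (rule inj_onI)
  fix x y assume x: "x \<in> {0..<2*n}" and y: "y \<in> {0..<2*n}" and eq: "zeta n (x + 1) = zeta n (y + 1)"
  show "x = y"
  proof (rule ccontr)
    assume "x \<noteq> y"
    then have "ss_int n (int x - int y) \<noteq> 0"
      using x y by (intro ss_int_nonzero) auto
    then have "zeta_int n (int x) - zeta_int n (int y) \<noteq> 0"
      by (simp add: zeta_int_diff[OF assms] eps_pow_def)
    then show False
      using eq unfolding zeta_conv_zeta_int by simp
  qed
qed

text \<open>Each factor ratio is \<open>eps_pow n 1 * ss_int n (p + 1 - j) / ss_int n (p - j)\<close>, so the
  product telescopes.\<close>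
lemma prod_zeta_int_diff_succ:
  assumes "n > 0" "lo \<le> hi + 1"
  shows "(\<Prod>j\<in>{lo..hi}. zeta_int n (p + 1) - zeta_int n j) * of_real (ss_int n (p - hi))
     = eps_pow n (hi - lo + 1) * of_real (ss_int n (p + 1 - lo)) * (\<Prod>j\<in>{lo..hi}. zeta_int n p - zeta_int n j)"
proof -
  define m where "m = nat (hi - lo + 1)"
  have hi: "hi = lo + int m - 1"
    using assms(2) by (simp add: m_def)
  have "(\<Prod>j\<in>{lo..lo + int m - 1}. zeta_int n (p + 1) - zeta_int n j) * of_real (ss_int n (p - (lo + int m - 1)))
     = eps_pow n (int m) * of_real (ss_int n (p + 1 - lo)) * (\<Prod>j\<in>{lo..lo + int m - 1}. zeta_int n p - zeta_int n j)"
  proof (induction m)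
    case 0
    show ?case by (simp add: eps_pow_def algebra_simps)
  next
    case (Suc m)
    let ?h = "lo + int m" and ?A = "\<Prod>j\<in>{lo..lo + int m - 1}. zeta_int n (p + 1) - zeta_int n j"
      and ?B = "\<Prod>j\<in>{lo..lo + int m - 1}. zeta_int n p - zeta_int n j"
    have split: "{lo..lo + int (Suc m) - 1} = insert ?h {lo..?h - 1}" by auto
    have step: "zeta_int n (p + 1) - zeta_int n ?h = 2 * \<i> * eps_pow n (p + ?h + 2) * of_real (ss_int n (p - (?h - 1)))"
      "zeta_int n p - zeta_int n ?h = 2 * \<i> * eps_pow n (p + ?h + 1) * of_real (ss_int n (p - ?h))"
      using zeta_int_diff[OF assms(1), of "p + 1" ?h] zeta_int_diff[OF assms(1), of p ?h]
      by (simp_all add: algebra_simps)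
    have eps: "eps_pow n (int m) * eps_pow n (p + ?h + 2) = eps_pow n (int (Suc m)) * eps_pow n (p + ?h + 1)"
      by (simp add: eps_pow_add algebra_simps)
    have "(zeta_int n (p + 1) - zeta_int n ?h) * ?A * of_real (ss_int n (p - ?h))
        = 2 * \<i> * eps_pow n (p + ?h + 2) * of_real (ss_int n (p - ?h)) * (?A * of_real (ss_int n (p - (?h - 1))))"
      by (simp add: step mult_ac)
    also have "\<dots> = 2 * \<i> * of_real (ss_int n (p - ?h)) * of_real (ss_int n (p + 1 - lo)) * ?B
        * (eps_pow n (int m) * eps_pow n (p + ?h + 2))"
      using Suc.IH by (simp add: mult_ac)
    also have "\<dots> = eps_pow n (int (Suc m)) * of_real (ss_int n (p + 1 - lo)) * ((zeta_int n p - zeta_int n ?h) * ?B)"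
      by (simp add: eps step mult_ac)
    finally show ?case
      unfolding split using finite_atLeastAtMost_int by (simp add: prod.insert)
  qed
  then show ?thesis by (simp add: hi)
qed

lemma prod_zeta_int_antipode:
  fixes l :: int
  assumes n: "n > 0"
  defines "J \<equiv> {l..l + int n - 2}"
  shows "(\<Prod>j\<in>J. - zeta_int n (l - 1) - zeta_int n j) = (- \<i>) ^ (n - 1) * (\<Prod>j\<in>J. zeta_int n (l - 1) - zeta_int n j)"
proof -
  let ?c = "\<lambda>j. 2 * \<i> * eps_pow n (l + j)"
  have card: "card J = n - 1" by (simp add: J_def nat_diff_distrib)
  have "- zeta_int n (l - 1) = zeta_int n (l - 1 + int n)"
    by (simp add: zeta_int_add_half_period[OF n])
  then have "(\<Prod>j\<in>J. - zeta_int n (l - 1) - zeta_int n j) = (\<Prod>j\<in>J. ?c j * \<i> * of_real (ss_int n (l + int n - 1 - j)))"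
    using n by (intro prod.cong refl)
      (simp add: zeta_int_diff eps_pow_add[symmetric] eps_pow_def[of n "int n"] algebra_simps)
  also have "\<dots> = (\<Prod>j\<in>J. ?c j) * \<i> ^ (n - 1) * of_real (\<Prod>j\<in>J. ss_int n (j - l + 1))"
  proof -
    have "(\<Prod>j\<in>J. complex_of_real (ss_int n (l + int n - 1 - j))) = (\<Prod>j\<in>J. of_real (ss_int n (j - l + 1)))"
      by (rule prod.reindex_bij_witness[where i = "\<lambda>j. 2 * l + int n - 2 - j" and j = "\<lambda>j. 2 * l + int n - 2 - j"])
        (auto simp: J_def algebra_simps)
    then show ?thesis by (simp add: prod.distrib card)
  qed
  also have "\<dots> = (- \<i>) ^ (n - 1) * ((\<Prod>j\<in>J. ?c j) * of_real (\<Prod>j\<in>J. - ss_int n (j - l + 1)))"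
    by (simp add: prod_uminus card power_mult_distrib[symmetric] mult_ac)
  also have "\<dots> = (- \<i>) ^ (n - 1) * (\<Prod>j\<in>J. zeta_int n (l - 1) - zeta_int n j)"
    using n by (simp add: zeta_int_diff prod.distrib ss_int_uminus[symmetric] algebra_simps)
  finally show ?thesis .
qed

section \<open>Arcs of consecutive roots\<close>

definition wrap :: "nat \<Rightarrow> int \<Rightarrow> nat" where
  "wrap n j = nat (j mod (2 * int n))"

lemma wrap_less: "n > 0 \<Longrightarrow> wrap n j < 2 * n"
  using pos_mod_bound[of "2 * int n" j] pos_mod_sign[of "2 * int n" j]
  by (simp add: wrap_def nat_less_iff)

lemma wrap_add_period [simp]: "wrap n (j + 2 * int n) = wrap n j"
  by (simp add: wrap_def)

lemma wrap_nonneg: "0 \<le> j \<Longrightarrow> j < 2 * int n \<Longrightarrow> wrap n j = nat j"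
  by (simp add: wrap_def)

lemma wrap_neg:
  assumes "j < 0" "- 2 * int n \<le> j"
  shows "wrap n j = nat (j + 2 * int n)"
proof -
  have "(j + 2 * int n) mod (2 * int n) = j + 2 * int n"
    using assms by (intro mod_pos_pos_trivial) auto
  then show ?thesis by (simp add: wrap_def)
qed

lemma zeta_wrap:
  assumes "n > 0"
  shows "zeta n (wrap n j + 1) = zeta_int n j"
proof -
  have "int (wrap n j) = j + 2 * int n * (- (j div (2 * int n)))"
    using pos_mod_sign[of "2 * int n" j] assms
    by (simp add: wrap_def minus_div_mult_eq_mod[symmetric] mult.commute)
  then show ?thesis
    unfolding zeta_conv_zeta_int using zeta_int_add_period[OF assms, of j "- (j div (2 * int n))"] by simp
qed

lemma inj_on_wrap:
  assumes "hi - lo < 2 * int n"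
  shows "inj_on (wrap n) {lo..hi}"
proof (rule inj_onI)
  fix x y assume x: "x \<in> {lo..hi}" and y: "y \<in> {lo..hi}" and eq: "wrap n x = wrap n y"
  have pos: "0 < 2 * int n" using x assms by auto
  then have "x mod (2 * int n) = y mod (2 * int n)"
    using eq pos_mod_sign[of "2 * int n" x] pos_mod_sign[of "2 * int n" y] by (simp add: wrap_def eq_nat_nat_iff)
  then have "2 * int n dvd x - y" by (simp add: mod_eq_dvd_iff)
  moreover have "\<bar>x - y\<bar> < 2 * int n" using x y assms by auto
  ultimately show "x = y"
    using dvd_imp_le_int[of "x - y" "2 * int n"] by (cases "x = y") auto
qed

lemma wrap_image_period:
  assumes "n > 0"
  shows "wrap n ` {l..l + 2 * int n - 1} = {0..<2*n}"
proof (rule card_subset_eq)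
  show "wrap n ` {l..l + 2 * int n - 1} \<subseteq> {0..<2*n}"
    using wrap_less[OF assms] by auto
  show "card (wrap n ` {l..l + 2 * int n - 1}) = card {0..<2*n}"
    using inj_on_wrap[of "l + 2 * int n - 1" l n] by (simp add: card_image)
qed simp

lemma wrap_image_diff:
  assumes "A \<subseteq> {l..l + 2 * int n - 1}" "B \<subseteq> {l..l + 2 * int n - 1}"
  shows "wrap n ` A - wrap n ` B = wrap n ` (A - B)"
  using assms by (intro inj_on_image_set_diff[symmetric, OF inj_on_wrap[of "l + 2 * int n - 1" l n]]) auto

lemma wrap_mem_image_iff:
  assumes "x \<in> {l..l + 2 * int n - 1}" "A \<subseteq> {l..l + 2 * int n - 1}"
  shows "wrap n x \<in> wrap n ` A \<longleftrightarrow> x \<in> A"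
  using assms by (intro inj_on_image_mem_iff[OF inj_on_wrap]) auto

lemma prod_zeta_wrap:
  assumes "n > 0" "hi - lo < 2 * int n"
  shows "(\<Prod>r \<in> wrap n ` {lo..hi}. f (zeta n (r + 1))) = (\<Prod>j\<in>{lo..hi}. f (zeta_int n j))"
  using prod.reindex[OF inj_on_wrap[OF assms(2)], of "\<lambda>r. f (zeta n (r + 1))"]
  unfolding comp_def zeta_wrap[OF assms(1)] .

definition arc :: "nat \<Rightarrow> int \<Rightarrow> nat set" where
  "arc n l = wrap n ` {l..l + int n - 1}"

lemma arc_subset: "n > 0 \<Longrightarrow> arc n l \<subseteq> {0..<2*n}"
  using wrap_less by (auto simp: arc_def)

lemma card_arc: "card (arc n l) = n"
  unfolding arc_def by (subst card_image) (auto intro: inj_on_wrap)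

lemma arc_eq:
  assumes "- int n \<le> l" "l \<le> 0"
  shows "arc n l = {0..<nat (l + int n)} \<union> {nat (l + 2 * int n)..<2 * n}"
proof -
  have "{l..l + int n - 1} = {l..-1} \<union> {0..l + int n - 1}" using assms by auto
  moreover have "wrap n ` {0..l + int n - 1} = {0..<nat (l + int n)}"
  proof -
    have "wrap n ` {0..l + int n - 1} = nat ` {0..l + int n - 1}"
      using assms by (intro image_cong refl wrap_nonneg) auto
    also have "\<dots> = {0..<nat (l + int n)}"
      by (auto simp: image_iff intro!: bexI[of _ "int _"])
    finally show ?thesis .
  qed
  moreover have "wrap n ` {l..-1} = {nat (l + 2 * int n)..<2 * n}"
  proof -
    have "wrap n ` {l..-1} = (\<lambda>j. nat (j + 2 * int n)) ` {l..-1}"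
      using assms by (intro image_cong refl wrap_neg) auto
    also have "\<dots> = {nat (l + 2 * int n)..<2 * n}"
      using assms by (auto simp: image_iff intro!: bexI[of _ "int _ - 2 * int n"])
    finally show ?thesis .
  qed
  ultimately show ?thesis by (auto simp: arc_def)
qed

section \<open>Minors at the roots\<close>

definition root_minor :: "nat \<Rightarrow> nat set \<Rightarrow> complex" where
  "root_minor n T = det (split_vandermonde n (\<lambda>j. zeta n (j + 1)) T)"

lemma det_A_mat:
  "det (A_mat n \<mu>) = (\<Sum>T\<in>column_sets n. root_minor n T * exp (of_real \<mu> * (\<Sum>j\<in>T. zeta n (j + 1))))"
proof -
  have "A_mat n \<mu> = mat (2*n) (2*n) (\<lambda>(r, j). if r < n then zeta n (j + 1) ^ r
      else zeta n (j + 1) ^ (r - n) * exp (of_real \<mu> * zeta n (j + 1)))"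
    by (simp add: A_mat_def)
  moreover have "(\<Prod>j\<in>T. exp (of_real \<mu> * zeta n (j + 1))) = exp (of_real \<mu> * (\<Sum>j\<in>T. zeta n (j + 1)))"
    if "T \<in> column_sets n" for T
  proof -
    have "finite T" using that finite_subset by (auto simp: column_sets_def)
    then show ?thesis by (simp only: exp_sum sum_distrib_left)
  qed
  ultimately show ?thesis
    by (simp add: det_scaled_vandermonde_expansion root_minor_def)
qed

lemma root_minor_nonzero:
  assumes "n > 0" "T \<subseteq> {0..<2*n}" "card T = n"
  shows "root_minor n T \<noteq> 0"
  unfolding root_minor_def using assms by (intro det_split_vandermonde_nonzero inj_on_zeta)

lemma prod_zeta_diff_nonzero:
  assumes "n > 0" "b < 2*n" "X \<subseteq> {0..<2*n}" "b \<notin> X"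
  shows "(\<Prod>r\<in>X. zeta n (b + 1) - zeta n (r + 1)) \<noteq> 0"
proof -
  have "zeta n (b + 1) \<noteq> zeta n (r + 1)" if "r \<in> X" for r
    using assms that inj_onD[OF inj_on_zeta[OF assms(1)], of b r] by auto
  moreover have "finite X" using assms(3) finite_subset by blast
  ultimately show ?thesis by simp
qed

lemma root_minor_exchange_adjacent:
  fixes p l1 h1 l2 h2 :: int
  assumes n: "n > 0"
    and T: "T \<subseteq> {0..<2*n}" "card T = n" "wrap n p \<in> T" "wrap n (p + 1) \<notin> T"
    and R: "T - {wrap n p} = wrap n ` {l1..h1}" "l1 \<le> h1 + 1" "h1 - l1 < 2 * int n"
    and U: "{0..<2*n} - T - {wrap n (p + 1)} = wrap n ` {l2..h2}" "h2 - l2 = h1 - l1"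
  shows "- root_minor n (insert (wrap n (p + 1)) (T - {wrap n p})) * of_real (ss_int n (p + 1 - l2) * ss_int n (p - h1))
       = root_minor n T * of_real (ss_int n (p + 1 - l1) * ss_int n (p - h2))"
proof -
  let ?a = "wrap n (p + 1)" and ?b = "wrap n p"
  let ?R = "T - {?b}" and ?U = "{0..<2*n} - T - {?a}"
  let ?PR = "\<lambda>x. \<Prod>j\<in>{l1..h1}. x - zeta_int n j" and ?PU = "\<lambda>x. \<Prod>j\<in>{l2..h2}. x - zeta_int n j"
  define E where "E = eps_pow n (h1 - l1 + 1)"
  have za: "zeta n (?a + 1) = zeta_int n (p + 1)" and zb: "zeta n (?b + 1) = zeta_int n p"
    by (rule zeta_wrap[OF n])+
  have prod_R: "(\<Prod>r\<in>?R. x - zeta n (r + 1)) = ?PR x" for x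
    unfolding R(1) by (rule prod_zeta_wrap[OF n R(3), of "\<lambda>z. x - z"])
  have prod_U: "(\<Prod>u\<in>?U. x - zeta n (u + 1)) = ?PU x" for x
    unfolding U(1) using R(3) U(2) by (intro prod_zeta_wrap[OF n, of h2 l2 "\<lambda>z. x - z"]) simp
  define D' where "D' = root_minor n (insert ?a ?R)"
  define D where "D = root_minor n T"
  define R1 R0 U1 U0 where "R1 = ?PR (zeta_int n (p + 1))" and "R0 = ?PR (zeta_int n p)"
    and "U1 = ?PU (zeta_int n (p + 1))" and "U0 = ?PU (zeta_int n p)"
  define s1 s2 s3 s4 :: complex where "s1 = of_real (ss_int n (p + 1 - l2))"
    and "s2 = of_real (ss_int n (p - h1))" and "s3 = of_real (ss_int n (p + 1 - l1))"
    and "s4 = of_real (ss_int n (p - h2))"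
  have exchange: "- D' * U1 * R0 = D * R1 * U0"
    using det_split_vandermonde_exchange[OF inj_on_zeta[OF n] T(1,2) wrap_less[OF n] T(4,3)]
    unfolding D'_def D_def R1_def R0_def U1_def U0_def root_minor_def prod_R prod_U za zb .
  have tel_R: "R1 * s2 = E * s3 * R0"
    unfolding R1_def R0_def s2_def s3_def E_def by (rule prod_zeta_int_diff_succ[OF n R(2)])
  have tel_U: "U1 * s4 = E * s1 * U0"
    unfolding U1_def U0_def s4_def s1_def E_def U(2)[symmetric]
    using R(2) U(2) by (intro prod_zeta_int_diff_succ[OF n]) simp
  have "(- D' * (s1 * s2)) * (E * U0 * R0) = - D' * (E * s1 * U0) * R0 * s2"
    by (simp add: mult_ac)
  also have "\<dots> = - D' * (U1 * s4) * R0 * s2"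
    by (simp only: tel_U)
  also have "\<dots> = (- D' * U1 * R0) * (s2 * s4)"
    by (simp add: mult_ac)
  also have "\<dots> = D * (R1 * s2) * U0 * s4"
    by (simp only: exchange) (simp add: mult_ac)
  also have "\<dots> = (D * (s3 * s4)) * (E * U0 * R0)"
    by (simp only: tel_R) (simp add: mult_ac)
  finally have eq: "(- D' * (s1 * s2)) * (E * U0 * R0) = (D * (s3 * s4)) * (E * U0 * R0)" .
  have "R0 \<noteq> 0" "U0 \<noteq> 0"
    using prod_zeta_diff_nonzero[OF n wrap_less[OF n, of p], of ?R] prod_zeta_diff_nonzero[OF n wrap_less[OF n, of p], of ?U] T
    unfolding R0_def U0_def prod_R prod_U zb by auto
  moreover have "E \<noteq> 0" by (simp add: E_def eps_pow_def)
  ultimately have "- D' * (s1 * s2) = D * (s3 * s4)"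
    using mult_right_cancel[THEN iffD1, OF _ eq] by simp
  then show ?thesis
    unfolding D'_def D_def s1_def s2_def s3_def s4_def by simp
qed

lemma root_minor_arc_exchange_top:
  assumes n: "n > 0"
  shows "root_minor n (insert (wrap n (l + int n)) (arc n l - {wrap n (l + int n - 1)}))
      * of_real ((sin (pi / (2 * real n)))\<^sup>2) = - root_minor n (arc n l)"
proof -
  let ?p = "l + int n - 1" and ?I = "{l..l + 2 * int n - 1}"
  have arc: "arc n l = wrap n ` {l..?p}" by (simp add: arc_def)
  have R: "arc n l - {wrap n ?p} = wrap n ` {l..?p - 1}"
  proof -
    have "wrap n ` {l..?p} - wrap n ` {?p} = wrap n ` ({l..?p} - {?p})"
      using n by (intro wrap_image_diff[where l = l]) auto
    moreover have "{l..?p} - {?p} = {l..?p - 1}" by auto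
    ultimately show ?thesis by (simp add: arc)
  qed
  have U: "{0..<2*n} - arc n l - {wrap n (?p + 1)} = wrap n ` {?p + 2..?p + int n}"
  proof -
    have "wrap n ` ?I - wrap n ` {l..?p} = wrap n ` (?I - {l..?p})"
      "wrap n ` (?I - {l..?p}) - wrap n ` {?p + 1} = wrap n ` (?I - {l..?p} - {?p + 1})"
      using n by (intro wrap_image_diff[where l = l]; auto)+
    moreover have "?I - {l..?p} - {?p + 1} = {?p + 2..?p + int n}" by auto
    ultimately show ?thesis
      unfolding arc wrap_image_period[OF n, of l, symmetric] by simp
  qed
  have mem: "wrap n ?p \<in> arc n l" "wrap n (?p + 1) \<notin> arc n l"
    using n wrap_mem_image_iff[of "?p + 1" l n "{l..?p}"] by (auto simp: arc)
  have "- root_minor n (insert (wrap n (?p + 1)) (arc n l - {wrap n ?p}))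
      * of_real (ss_int n (?p + 1 - (?p + 2)) * ss_int n (?p - (?p - 1)))
      = root_minor n (arc n l) * of_real (ss_int n (?p + 1 - l) * ss_int n (?p - (?p + int n)))"
    using n by (intro root_minor_exchange_adjacent[OF n arc_subset[OF n] card_arc mem R _ _ U]) auto
  then show ?thesis
    using ss_int_values[OF n] by (simp add: power2_eq_square)
qed

lemma root_minor_arc_exchange_bottom:
  assumes n: "n > 0"
  shows "root_minor n (insert (wrap n (l - 1)) (arc n l - {wrap n l}))
      * of_real ((sin (pi / (2 * real n)))\<^sup>2) = - root_minor n (arc n l)"
proof -
  let ?p = "l - 1" and ?I = "{l - int n..l - int n + 2 * int n - 1}" and ?S = "insert (l - 1) {l + 1..l + int n - 1}"
  have T: "insert (wrap n ?p) (arc n l - {wrap n l}) = wrap n ` ?S"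
  proof -
    have "wrap n ` {l..l + int n - 1} - wrap n ` {l} = wrap n ` ({l..l + int n - 1} - {l})"
      using n by (intro wrap_image_diff[where l = l]) auto
    moreover have "{l..l + int n - 1} - {l} = {l + 1..l + int n - 1}" by auto
    ultimately show ?thesis by (simp add: arc_def)
  qed
  have R: "wrap n ` ?S - {wrap n ?p} = wrap n ` {l + 1..l + int n - 1}"
  proof -
    have "wrap n ` ?S - wrap n ` {?p} = wrap n ` (?S - {?p})"
      using n by (intro wrap_image_diff[where l = "l - int n"]) auto
    moreover have "?S - {?p} = {l + 1..l + int n - 1}" by auto
    ultimately show ?thesis by simp
  qed
  have U: "{0..<2*n} - wrap n ` ?S - {wrap n (?p + 1)} = wrap n ` {l - int n..l - 2}"
  proof -
    have "wrap n ` ?I - wrap n ` ?S = wrap n ` (?I - ?S)"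
      "wrap n ` (?I - ?S) - wrap n ` {?p + 1} = wrap n ` (?I - ?S - {?p + 1})"
      using n by (intro wrap_image_diff[where l = "l - int n"]; auto)+
    moreover have "?I - ?S - {?p + 1} = {l - int n..l - 2}" by auto
    ultimately show ?thesis
      unfolding wrap_image_period[OF n, of "l - int n", symmetric] by simp
  qed
  have mem: "wrap n ?p \<in> wrap n ` ?S" "wrap n (?p + 1) \<notin> wrap n ` ?S"
    using n wrap_mem_image_iff[of "?p + 1" "l - int n" n ?S] by auto
  have "inj_on (wrap n) ?S"
    using n by (intro inj_on_subset[OF inj_on_wrap[of "l + int n - 1" "l - 1" n]]) auto
  then have card: "card (wrap n ` ?S) = n"
    using n by (simp add: card_image)
  have sub: "wrap n ` ?S \<subseteq> {0..<2*n}"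
    using wrap_less[OF n] by auto
  have restored: "insert (wrap n (?p + 1)) (wrap n ` ?S - {wrap n ?p}) = arc n l"
  proof -
    have "{l..l + int n - 1} = insert l {l + 1..l + int n - 1}" using n by auto
    then show ?thesis unfolding R by (simp add: arc_def)
  qed
  have "- root_minor n (insert (wrap n (?p + 1)) (wrap n ` ?S - {wrap n ?p}))
      * of_real (ss_int n (?p + 1 - (l - int n)) * ss_int n (?p - (l + int n - 1)))
      = root_minor n (wrap n ` ?S) * of_real (ss_int n (?p + 1 - (l + 1)) * ss_int n (?p - (l - 2)))"
    using n by (intro root_minor_exchange_adjacent[OF n sub card mem R _ _ U]) auto
  then show ?thesis
    unfolding restored T using ss_int_values[OF n] by (simp add: power2_eq_square)
qed

text \<open>Exchange the top endpoint of the arc for the root just below it; since the two roots are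
  antipodal, all products in the exchange relation run over the same arc.\<close>
lemma root_minor_arc_shift:
  assumes n: "n > 0"
  shows "root_minor n (arc n (l - 1)) = (- 1) ^ n * root_minor n (arc n l)"
proof -
  let ?a = "wrap n (l - 1)" and ?b = "wrap n (l + int n - 1)"
  let ?I = "{l..l + 2 * int n - 1}" and ?J = "{l..l + int n - 2}"
  let ?P = "\<lambda>x. \<Prod>j\<in>?J. x - zeta_int n j"
  define Z where "Z = zeta_int n (l - 1)"
  have arc: "arc n l = wrap n ` {l..l + int n - 1}" by (simp add: arc_def)
  have a: "?a = wrap n (l + 2 * int n - 1)"
    using wrap_add_period[of n "l - 1"] by (simp add: algebra_simps)
  have a_notin: "?a \<notin> arc n l" and b_in: "?b \<in> arc n l"
    using n wrap_mem_image_iff[of "l + 2 * int n - 1" l n "{l..l + int n - 1}"] by (auto simp: arc a)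
  have R: "arc n l - {?b} = wrap n ` ?J"
  proof -
    have "wrap n ` {l..l + int n - 1} - wrap n ` {l + int n - 1} = wrap n ` ({l..l + int n - 1} - {l + int n - 1})"
      using n by (intro wrap_image_diff[where l = l]) auto
    moreover have "{l..l + int n - 1} - {l + int n - 1} = ?J" by auto
    ultimately show ?thesis by (simp add: arc)
  qed
  have U: "{0..<2*n} - arc n l - {?a} = wrap n ` {l + int n..l + 2 * int n - 2}"
  proof -
    have "wrap n ` ?I - wrap n ` {l..l + int n - 1} = wrap n ` (?I - {l..l + int n - 1})"
      "wrap n ` (?I - {l..l + int n - 1}) - wrap n ` {l + 2 * int n - 1}
        = wrap n ` (?I - {l..l + int n - 1} - {l + 2 * int n - 1})"
      using n by (intro wrap_image_diff[where l = l]; auto)+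
    moreover have "?I - {l..l + int n - 1} - {l + 2 * int n - 1} = {l + int n..l + 2 * int n - 2}" by auto
    ultimately show ?thesis
      unfolding arc a wrap_image_period[OF n, of l, symmetric] by simp
  qed
  have shifted: "insert ?a (arc n l - {?b}) = arc n (l - 1)"
  proof -
    have "{l - 1..l - 1 + int n - 1} = insert (l - 1) ?J" using n by auto
    then show ?thesis unfolding R by (simp add: arc_def)
  qed
  have prod_R: "(\<Prod>r\<in>arc n l - {?b}. x - zeta n (r + 1)) = ?P x" for x
    unfolding R using n by (intro prod_zeta_wrap[of n _ _ "\<lambda>z. x - z"]) auto
  have prod_U: "(\<Prod>u\<in>{0..<2*n} - arc n l - {?a}. x - zeta n (u + 1)) = ?P (- x) * (- 1) ^ (n - 1)" for x
  proof -
    have "(\<Prod>u\<in>{0..<2*n} - arc n l - {?a}. x - zeta n (u + 1)) = (\<Prod>j\<in>{l + int n..l + 2 * int n - 2}. x - zeta_int n j)"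
      unfolding U using n by (intro prod_zeta_wrap[of n _ _ "\<lambda>z. x - z"]) auto
    also have "\<dots> = (\<Prod>j\<in>?J. x - zeta_int n (j + int n))"
      by (rule prod.reindex_bij_witness[where i = "\<lambda>j. j + int n" and j = "\<lambda>j. j - int n"]) auto
    also have "\<dots> = (\<Prod>j\<in>?J. - (- x - zeta_int n j))"
      by (simp add: zeta_int_add_half_period[OF n] algebra_simps)
    finally have "(\<Prod>u\<in>{0..<2*n} - arc n l - {?a}. x - zeta n (u + 1)) = (\<Prod>j\<in>?J. - (- x - zeta_int n j))" .
    moreover have "card ?J = n - 1" by (cases n) auto
    ultimately show ?thesis unfolding prod_uminus by (simp add: mult.commute)
  qed
  have za: "zeta n (?a + 1) = Z" and zb: "zeta n (?b + 1) = - Z"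
    unfolding zeta_wrap[OF n] Z_def using zeta_int_add_half_period[OF n, of "l - 1"] by (simp_all add: algebra_simps)
  define D' D where "D' = root_minor n (arc n (l - 1))" and "D = root_minor n (arc n l)"
  define P q s where "P = ?P Z" and "q = (- \<i>) ^ (n - 1)" and "s = (- 1 :: complex) ^ (n - 1)"
  have exchange: "- D' * (?P (- Z) * s) * ?P (- Z) = D * P * (P * s)"
    using det_split_vandermonde_exchange[OF inj_on_zeta[OF n] arc_subset[OF n] card_arc wrap_less[OF n] a_notin b_in]
    unfolding D'_def D_def P_def s_def root_minor_def[symmetric] shifted prod_R prod_U za zb minus_minus .
  have antipode: "?P (- Z) = q * P"
    unfolding Z_def P_def q_def by (rule prod_zeta_int_antipode[OF n])
  have q: "q * q = s" and s: "s * s = 1"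
    by (simp_all add: q_def s_def power_mult_distrib[symmetric])
  have "- D' * (P * P) = - D' * ((q * q) * s) * (P * P)"
    unfolding q s by simp
  also have "\<dots> = - D' * (?P (- Z) * s) * ?P (- Z)"
    unfolding antipode by (simp add: mult_ac)
  also have "\<dots> = (D * s) * (P * P)"
    unfolding exchange by (simp add: mult_ac)
  finally have eq: "- D' * (P * P) = (D * s) * (P * P)" .
  have "P \<noteq> 0"
  proof -
    have "arc n l - {?b} \<subseteq> {0..<2*n}" "?a \<notin> arc n l - {?b}"
      using arc_subset[OF n] a_notin by auto
    from prod_zeta_diff_nonzero[OF n wrap_less[OF n] this] show ?thesis
      unfolding P_def prod_R za .
  qed
  then have "- D' = D * s"
    using mult_right_cancel[THEN iffD1, OF _ eq] by simp
  then have "D' = - s * D"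
    by (metis minus_minus minus_mult_left mult.commute)
  moreover have "- s = (- 1) ^ n"
    using power_minus_mult[OF n, of "- 1 :: complex"] by (simp add: s_def)
  ultimately show ?thesis
    by (simp add: D'_def D_def)
qed

section \<open>The case \<open>n = 2 * k + 1\<close>\<close>

lemma exp_term_bigo:
  fixes c s :: complex
  assumes "Re s \<le> \<gamma>"
  shows "(\<lambda>\<mu>. c * exp (of_real \<mu> * s)) \<in> O[at_top](\<lambda>\<mu>. of_real (exp (\<gamma> * \<mu>)))"
proof (intro bigoI[where c = "norm c"] eventually_mono[OF eventually_ge_at_top[of 0]])
  fix \<mu> :: real assume "0 \<le> \<mu>"
  then have "exp (\<mu> * Re s) \<le> exp (\<gamma> * \<mu>)"
    using mult_left_mono[OF assms \<open>0 \<le> \<mu>\<close>] by (simp add: mult.commute)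
  then show "norm (c * exp (of_real \<mu> * s)) \<le> norm c * norm (complex_of_real (exp (\<gamma> * \<mu>)))"
    by (simp add: norm_mult mult_left_mono)
qed

lemma three_of_six_cases:
  fixes b1 b2 b3 b4 b5 b6 :: bool
  assumes "of_bool b1 + of_bool b2 + of_bool b3 + of_bool b4 + of_bool b5 + of_bool b6 = (3 :: nat)"
  shows "of_bool b1 + of_bool b6 \<le> (of_bool b3 + of_bool b4 :: nat) \<or>
    (b1, b2, b3, b4, b5, b6) \<in> {(True, True, False, False, False, True), (True, False, False, False, True, True),
      (True, False, True, False, False, True), (True, True, False, False, True, False),
      (True, False, False, True, False, True), (False, True, False, False, True, True)}"
  using assms by (cases b1; cases b2; cases b3; cases b4; cases b5; cases b6) auto

context
  fixes k :: nat
  assumes k: "2 \<le> k"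
begin

private abbreviation (input) \<alpha> where "\<alpha> \<equiv> 2 * k + 1"

definition col_zeta :: "nat \<Rightarrow> complex" where
  "col_zeta j = zeta \<alpha> (j + 1)"

text \<open>Columns by the real part \<open>cc \<alpha> (2 * j + 1)\<close> of their root: at least \<open>cc \<alpha> (2 * k - 3)\<close> on
  \<open>core_cols\<close>, at most its negative on \<open>far_cols\<close>; \<open>edge_cols\<close> holds \<open>\<plusminus>\<i>\<close> and the four roots with
  real part \<open>\<plusminus>cc \<alpha> (2 * k - 1)\<close>.\<close>
definition core_cols :: "nat set" where "core_cols = {0..k - 2} \<union> {3 * k + 3..4 * k + 1}"
definition edge_cols :: "nat set" where "edge_cols = {k - 1, k, k + 1, 3 * k, 3 * k + 1, 3 * k + 2}"
definition far_cols :: "nat set" where "far_cols = {k + 2..3 * k - 1}"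

lemma col_zeta_values:
  "col_zeta (k - 1) = Complex (cc \<alpha> (2 * k - 1)) (ss \<alpha> (2 * k - 1))"
  "col_zeta k = \<i>"
  "col_zeta (k + 1) = Complex (- cc \<alpha> (2 * k - 1)) (ss \<alpha> (2 * k - 1))"
  "col_zeta (3 * k) = Complex (- cc \<alpha> (2 * k - 1)) (- ss \<alpha> (2 * k - 1))"
  "col_zeta (3 * k + 1) = - \<i>"
  "col_zeta (3 * k + 2) = Complex (cc \<alpha> (2 * k - 1)) (- ss \<alpha> (2 * k - 1))"
proof -
  have km: "2 * (k - 1) + 1 = 2 * k - 1" using k by simp
  show a: "col_zeta (k - 1) = Complex (cc \<alpha> (2 * k - 1)) (ss \<alpha> (2 * k - 1))"
    unfolding col_zeta_def zeta_eq_Complex km ..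
  have "real (2 * k + 1) * pi / (2 * real \<alpha>) = pi / 2"
    by (simp add: field_simps)
  then show b: "col_zeta k = \<i>"
    unfolding col_zeta_def zeta_eq_Complex cc_def ss_def by (simp only:) (simp add: complex_eq_iff)
  have "real (2 * (k + 1) + 1) * pi / (2 * real \<alpha>) = pi - real (2 * k - 1) * pi / (2 * real \<alpha>)"
    using k by (simp add: of_nat_diff field_simps)
  then show c: "col_zeta (k + 1) = Complex (- cc \<alpha> (2 * k - 1)) (ss \<alpha> (2 * k - 1))"
    unfolding col_zeta_def zeta_eq_Complex by (simp add: cc_def ss_def)
  show "col_zeta (3 * k) = Complex (- cc \<alpha> (2 * k - 1)) (- ss \<alpha> (2 * k - 1))"
    using zeta_reflect[of "k + 1" \<alpha>] c by (simp add: col_zeta_def algebra_simps complex_eq_iff)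
  show "col_zeta (3 * k + 1) = - \<i>"
    using zeta_reflect[of k \<alpha>] b by (simp add: col_zeta_def algebra_simps)
  show "col_zeta (3 * k + 2) = Complex (cc \<alpha> (2 * k - 1)) (- ss \<alpha> (2 * k - 1))"
    using zeta_reflect[of "k - 1" \<alpha>] a k by (simp add: col_zeta_def algebra_simps complex_eq_iff)
qed

lemma core_disjoint: "core_cols \<inter> edge_cols = {}" "core_cols \<inter> far_cols = {}" "edge_cols \<inter> far_cols = {}"
  using k by (auto simp: core_cols_def edge_cols_def far_cols_def)

lemma core_union: "{0..<2 * \<alpha>} = core_cols \<union> edge_cols \<union> far_cols"
  using k by (auto simp: core_cols_def edge_cols_def far_cols_def)

lemma card_core: "card core_cols = 2 * k - 2"
proof -
  have "card core_cols = card {0..k - 2} + card {3 * k + 3..4 * k + 1}"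
    unfolding core_cols_def by (rule card_Un_disjoint) (use k in auto)
  then show ?thesis using k by simp
qed

lemma sum_core: "(\<Sum>j\<in>core_cols. col_zeta j) = of_real (sigma k + 2 * cc \<alpha> (2 * k - 3))"
proof -
  have high: "(\<Sum>j\<in>{3 * k + 3..4 * k + 1}. col_zeta j) = (\<Sum>j\<in>{0..k - 2}. cnj (col_zeta j))"
  proof (rule sum.reindex_bij_witness[where i = "\<lambda>j. 4 * k + 1 - j" and j = "\<lambda>j. 4 * k + 1 - j"])
    fix j assume "j \<in> {3 * k + 3..4 * k + 1}"
    then show "cnj (col_zeta (4 * k + 1 - j)) = col_zeta j"
      using zeta_reflect[of "4 * k + 1 - j" \<alpha>] by (simp add: col_zeta_def)
  qed (use k in auto)
  have "(\<Sum>j\<in>core_cols. col_zeta j) = (\<Sum>j\<in>{0..k - 2}. col_zeta j) + (\<Sum>j\<in>{3 * k + 3..4 * k + 1}. col_zeta j)"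
    unfolding core_cols_def by (rule sum.union_disjoint) (use k in auto)
  also have "\<dots> = (\<Sum>j\<in>{0..k - 2}. col_zeta j + cnj (col_zeta j))"
    unfolding high sum.distrib ..
  also have "\<dots> = of_real (2 * (\<Sum>j = 0..k - 2. cc \<alpha> (2 * j + 1)))"
    unfolding complex_add_cnj col_zeta_def zeta_eq_Complex by (simp add: sum_distrib_left)
  also have "(\<Sum>j = 0..k - 2. cc \<alpha> (2 * j + 1)) = (\<Sum>j = 1..k - 2. cc \<alpha> (2 * j - 1)) + cc \<alpha> (2 * k - 3)"
  proof -
    have "{0..k - 2} = insert (k - 2) {0..<k - 2}" using k by auto
    moreover have "(\<Sum>j\<in>{0..<k - 2}. cc \<alpha> (2 * j + 1)) = (\<Sum>j = 1..k - 2. cc \<alpha> (2 * j - 1))"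
      by (rule sum.reindex_bij_witness[where i = "\<lambda>j. j - 1" and j = "\<lambda>j. j + 1"]) auto
    moreover have "2 * (k - 2) + 1 = 2 * k - 3" using k by simp
    ultimately show ?thesis by simp
  qed
  finally show ?thesis by (simp add: sigma_def algebra_simps)
qed

lemma sum_core_union:
  assumes "E \<subseteq> edge_cols"
  shows "(\<Sum>j\<in>core_cols \<union> E. col_zeta j) = of_real (sigma k + 2 * cc \<alpha> (2 * k - 3)) + (\<Sum>j\<in>E. col_zeta j)"
proof -
  have "finite core_cols" "finite E" "core_cols \<inter> E = {}"
    using assms core_disjoint(1) finite_subset by (auto simp: core_cols_def edge_cols_def)
  then show ?thesis by (simp add: sum.union_disjoint sum_core)
qed

lemma cc_bounds:
  "0 < cc \<alpha> (2 * k - 1)" "cc \<alpha> (2 * k - 1) < cc \<alpha> (2 * k - 3)" "cc \<alpha> (2 * k - 3) \<le> 2 * cc \<alpha> (2 * k - 1)"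
proof -
  define x where "x = pi / real \<alpha>"
  have x: "0 < x" "x < pi / 3"
    unfolding x_def by simp (rule divide_strict_left_mono, use k in auto)
  have "real (2 * k - 1) * pi / (2 * real \<alpha>) = pi / 2 - x"
    "real (2 * k - 3) * pi / (2 * real \<alpha>) = pi / 2 - 2 * x"
    using k by (simp_all add: x_def of_nat_diff field_simps)
  then have dl: "cc \<alpha> (2 * k - 1) = sin x" and bt: "cc \<alpha> (2 * k - 3) = 2 * sin x * cos x"
    by (simp_all add: cc_def cos_diff sin_double)
  have "0 < sin x" using x by (intro sin_gt_zero) auto
  moreover have "1 / 2 < cos x"
    using x cos_monotone_0_pi[of x "pi / 3"] by (simp add: cos_60)
  moreover have "cos x \<le> 1" by simp
  ultimately show "0 < cc \<alpha> (2 * k - 1)" "cc \<alpha> (2 * k - 1) < cc \<alpha> (2 * k - 3)"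
    "cc \<alpha> (2 * k - 3) \<le> 2 * cc \<alpha> (2 * k - 1)"
    unfolding dl bt by (simp_all add: mult_le_cancel_left1 mult_less_cancel_left1 mult.assoc)
qed

text \<open>The six column sets whose exponent has real part above \<open>gamma3 k\<close>: the arcs through
  \<open>\<plusminus>\<i>\<close> and their four endpoint exchanges.\<close>
definition lead_plus :: "nat set" where "lead_plus = core_cols \<union> {k - 1, k, 3 * k + 2}"
definition lead_minus :: "nat set" where "lead_minus = core_cols \<union> {k - 1, 3 * k + 1, 3 * k + 2}"
definition second_plus_a :: "nat set" where "second_plus_a = core_cols \<union> {k - 1, k + 1, 3 * k + 2}"
definition second_plus_b :: "nat set" where "second_plus_b = core_cols \<union> {k - 1, k, 3 * k + 1}"
definition second_minus_a :: "nat set" where "second_minus_a = core_cols \<union> {k - 1, 3 * k, 3 * k + 2}"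
definition second_minus_b :: "nat set" where "second_minus_b = core_cols \<union> {k, 3 * k + 1, 3 * k + 2}"

definition dominant_sets :: "nat set set" where
  "dominant_sets = {lead_plus, lead_minus, second_plus_a, second_plus_b, second_minus_a, second_minus_b}"

lemma dominant_sums:
  "(\<Sum>j\<in>lead_plus. col_zeta j) = Complex (gamma1 k) 1"
  "(\<Sum>j\<in>lead_minus. col_zeta j) = Complex (gamma1 k) (- 1)"
  "(\<Sum>j\<in>second_plus_a. col_zeta j) = Complex (gamma2 k) (ss \<alpha> (2 * k - 1))"
  "(\<Sum>j\<in>second_plus_b. col_zeta j) = Complex (gamma2 k) (ss \<alpha> (2 * k - 1))"
  "(\<Sum>j\<in>second_minus_a. col_zeta j) = Complex (gamma2 k) (- ss \<alpha> (2 * k - 1))"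
  "(\<Sum>j\<in>second_minus_b. col_zeta j) = Complex (gamma2 k) (- ss \<alpha> (2 * k - 1))"
proof -
  have triple: "(\<Sum>j\<in>core_cols \<union> {a, b, c}. col_zeta j)
      = of_real (sigma k + 2 * cc \<alpha> (2 * k - 3)) + col_zeta a + col_zeta b + col_zeta c"
    if "{a, b, c} \<subseteq> edge_cols" "distinct [a, b, c]" for a b c
  proof -
    have "(\<Sum>j\<in>{a, b, c}. col_zeta j) = col_zeta a + col_zeta b + col_zeta c"
      using that(2) by (simp add: add.assoc)
    then show ?thesis
      unfolding sum_core_union[OF that(1)] by (simp add: add.assoc)
  qed
  have "(\<Sum>j\<in>lead_plus. col_zeta j)
      = of_real (sigma k + 2 * cc \<alpha> (2 * k - 3)) + col_zeta (k - 1) + col_zeta k + col_zeta (3 * k + 2)"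
    unfolding lead_plus_def using k by (intro triple) (auto simp: edge_cols_def)
  then show "(\<Sum>j\<in>lead_plus. col_zeta j) = Complex (gamma1 k) 1"
    unfolding col_zeta_values by (simp add: complex_eq_iff gamma1_def)
  have "(\<Sum>j\<in>lead_minus. col_zeta j)
      = of_real (sigma k + 2 * cc \<alpha> (2 * k - 3)) + col_zeta (k - 1) + col_zeta (3 * k + 1) + col_zeta (3 * k + 2)"
    unfolding lead_minus_def using k by (intro triple) (auto simp: edge_cols_def)
  then show "(\<Sum>j\<in>lead_minus. col_zeta j) = Complex (gamma1 k) (- 1)"
    unfolding col_zeta_values by (simp add: complex_eq_iff gamma1_def)
  have "(\<Sum>j\<in>second_plus_a. col_zeta j)
      = of_real (sigma k + 2 * cc \<alpha> (2 * k - 3)) + col_zeta (k - 1) + col_zeta (k + 1) + col_zeta (3 * k + 2)"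
    unfolding second_plus_a_def using k by (intro triple) (auto simp: edge_cols_def)
  then show "(\<Sum>j\<in>second_plus_a. col_zeta j) = Complex (gamma2 k) (ss \<alpha> (2 * k - 1))"
    unfolding col_zeta_values by (simp add: complex_eq_iff gamma2_def)
  have "(\<Sum>j\<in>second_plus_b. col_zeta j)
      = of_real (sigma k + 2 * cc \<alpha> (2 * k - 3)) + col_zeta (k - 1) + col_zeta k + col_zeta (3 * k + 1)"
    unfolding second_plus_b_def using k by (intro triple) (auto simp: edge_cols_def)
  then show "(\<Sum>j\<in>second_plus_b. col_zeta j) = Complex (gamma2 k) (ss \<alpha> (2 * k - 1))"
    unfolding col_zeta_values by (simp add: complex_eq_iff gamma2_def)
  have "(\<Sum>j\<in>second_minus_a. col_zeta j)
      = of_real (sigma k + 2 * cc \<alpha> (2 * k - 3)) + col_zeta (k - 1) + col_zeta (3 * k) + col_zeta (3 * k + 2)"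
    unfolding second_minus_a_def using k by (intro triple) (auto simp: edge_cols_def)
  then show "(\<Sum>j\<in>second_minus_a. col_zeta j) = Complex (gamma2 k) (- ss \<alpha> (2 * k - 1))"
    unfolding col_zeta_values by (simp add: complex_eq_iff gamma2_def)
  have "(\<Sum>j\<in>second_minus_b. col_zeta j)
      = of_real (sigma k + 2 * cc \<alpha> (2 * k - 3)) + col_zeta k + col_zeta (3 * k + 1) + col_zeta (3 * k + 2)"
    unfolding second_minus_b_def using k by (intro triple) (auto simp: edge_cols_def)
  then show "(\<Sum>j\<in>second_minus_b. col_zeta j) = Complex (gamma2 k) (- ss \<alpha> (2 * k - 1))"
    unfolding col_zeta_values by (simp add: complex_eq_iff gamma2_def)
qed

lemma dominant_arcs:
  "lead_plus = arc \<alpha> (- int k)"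
  "lead_minus = arc \<alpha> (- int k - 1)"
  "second_plus_a = insert (wrap \<alpha> (- int k + int \<alpha>)) (arc \<alpha> (- int k) - {wrap \<alpha> (- int k + int \<alpha> - 1)})"
  "second_plus_b = insert (wrap \<alpha> (- int k - 1)) (arc \<alpha> (- int k) - {wrap \<alpha> (- int k)})"
  "second_minus_b = insert (wrap \<alpha> (- int k - 1 + int \<alpha>)) (arc \<alpha> (- int k - 1) - {wrap \<alpha> (- int k - 1 + int \<alpha> - 1)})"
  "second_minus_a = insert (wrap \<alpha> (- int k - 1 - 1)) (arc \<alpha> (- int k - 1) - {wrap \<alpha> (- int k - 1)})"
proof -
  have "nat (- int k + int \<alpha>) = k + 1" "nat (- int k + 2 * int \<alpha>) = 3 * k + 2"
    "nat (- int k - 1 + int \<alpha>) = k" "nat (- int k - 1 + 2 * int \<alpha>) = 3 * k + 1"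
    by (simp_all add: nat_eq_iff)
  then have arcs: "arc \<alpha> (- int k) = {0..<k + 1} \<union> {3 * k + 2..<2 * \<alpha>}"
    "arc \<alpha> (- int k - 1) = {0..<k} \<union> {3 * k + 1..<2 * \<alpha>}"
    using arc_eq[of \<alpha> "- int k"] arc_eq[of \<alpha> "- int k - 1"] by simp_all
  have wraps: "wrap \<alpha> (- int k + int \<alpha>) = k + 1" "wrap \<alpha> (- int k + int \<alpha> - 1) = k"
    "wrap \<alpha> (- int k - 1 + int \<alpha>) = k" "wrap \<alpha> (- int k - 1 + int \<alpha> - 1) = k - 1"
    "wrap \<alpha> (- int k - 1) = 3 * k + 1" "wrap \<alpha> (- int k) = 3 * k + 2" "wrap \<alpha> (- int k - 1 - 1) = 3 * k"
    using k by (subst wrap_nonneg wrap_neg; simp)+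
  show "lead_plus = arc \<alpha> (- int k)" "lead_minus = arc \<alpha> (- int k - 1)"
    "second_plus_a = insert (wrap \<alpha> (- int k + int \<alpha>)) (arc \<alpha> (- int k) - {wrap \<alpha> (- int k + int \<alpha> - 1)})"
    "second_plus_b = insert (wrap \<alpha> (- int k - 1)) (arc \<alpha> (- int k) - {wrap \<alpha> (- int k)})"
    "second_minus_b = insert (wrap \<alpha> (- int k - 1 + int \<alpha>)) (arc \<alpha> (- int k - 1) - {wrap \<alpha> (- int k - 1 + int \<alpha> - 1)})"
    "second_minus_a = insert (wrap \<alpha> (- int k - 1 - 1)) (arc \<alpha> (- int k - 1) - {wrap \<alpha> (- int k - 1)})"
    unfolding arcs wraps using k
    by (auto simp: lead_plus_def lead_minus_def second_plus_a_def second_plus_b_def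
        second_minus_a_def second_minus_b_def core_cols_def)
qed

lemma dominant_minors:
  defines "D \<equiv> root_minor \<alpha> lead_plus" and "s \<equiv> complex_of_real ((sin (pi / (2 * real \<alpha>)))\<^sup>2)"
  shows "root_minor \<alpha> lead_minus = - D"
    "root_minor \<alpha> second_plus_a * s = - D" "root_minor \<alpha> second_plus_b * s = - D"
    "root_minor \<alpha> second_minus_a * s = D" "root_minor \<alpha> second_minus_b * s = D"
proof -
  have pos: "\<alpha> > 0" by simp
  show minus: "root_minor \<alpha> lead_minus = - D"
    unfolding D_def dominant_arcs root_minor_arc_shift[OF pos] by simp
  show "root_minor \<alpha> second_plus_a * s = - D"
    unfolding D_def s_def dominant_arcs by (rule root_minor_arc_exchange_top[OF pos])
  show "root_minor \<alpha> second_plus_b * s = - D"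
    unfolding D_def s_def dominant_arcs by (rule root_minor_arc_exchange_bottom[OF pos])
  show "root_minor \<alpha> second_minus_a * s = D"
    using root_minor_arc_exchange_bottom[OF pos, of "- int k - 1"] minus
    unfolding D_def s_def dominant_arcs by simp
  show "root_minor \<alpha> second_minus_b * s = D"
    using root_minor_arc_exchange_top[OF pos, of "- int k - 1"] minus
    unfolding D_def s_def dominant_arcs by simp
qed

lemma core_triple:
  assumes "{a, b, c} \<subseteq> edge_cols" "distinct [a, b, c]"
  shows "core_cols \<union> {a, b, c} \<in> column_sets \<alpha>"
proof -
  have "card (core_cols \<union> {a, b, c}) = card core_cols + card {a, b, c}"
    using assms core_disjoint(1) by (intro card_Un_disjoint) (auto simp: core_cols_def)
  then show ?thesis
    using assms k card_core core_union by (auto simp: column_sets_def)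
qed

lemma dominant_subsets: "dominant_sets \<subseteq> column_sets \<alpha>"
  unfolding dominant_sets_def insert_subset lead_plus_def lead_minus_def second_plus_a_def second_plus_b_def
    second_minus_a_def second_minus_b_def
  using k by (intro conjI empty_subsetI core_triple) (auto simp: edge_cols_def)

definition edge_pattern :: "nat set \<Rightarrow> bool \<times> bool \<times> bool \<times> bool \<times> bool \<times> bool" where
  "edge_pattern T = (k - 1 \<in> T, k \<in> T, k + 1 \<in> T, 3 * k \<in> T, 3 * k + 1 \<in> T, 3 * k + 2 \<in> T)"

lemma edge_patterns:
  "edge_pattern lead_plus = (True, True, False, False, False, True)"
  "edge_pattern lead_minus = (True, False, False, False, True, True)"
  "edge_pattern second_plus_a = (True, False, True, False, False, True)"
  "edge_pattern second_plus_b = (True, True, False, False, True, False)"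
  "edge_pattern second_minus_a = (True, False, False, True, False, True)"
  "edge_pattern second_minus_b = (False, True, False, False, True, True)"
  using k by (auto simp: edge_pattern_def lead_plus_def lead_minus_def second_plus_a_def
      second_plus_b_def second_minus_a_def second_minus_b_def core_cols_def)

lemma dominant_distinct:
  "distinct [lead_plus, lead_minus, second_plus_a, second_plus_b, second_minus_a, second_minus_b]"
  by (auto dest: arg_cong[where f = edge_pattern] simp: edge_patterns)

lemma col_zeta_reflect: "j \<le> 4 * k + 1 \<Longrightarrow> col_zeta (4 * k + 1 - j) = cnj (col_zeta j)"
  using zeta_reflect[of j \<alpha>] by (simp add: col_zeta_def)

lemma re_col_zeta: "Re (col_zeta j) = cc \<alpha> (2 * j + 1)"
  unfolding col_zeta_def zeta_eq_Complex by simp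

lemma re_col_zeta_core: "j \<in> core_cols \<Longrightarrow> cc \<alpha> (2 * k - 3) \<le> Re (col_zeta j)"
proof -
  have low: "cc \<alpha> (2 * k - 3) \<le> Re (col_zeta j)" if "j \<le> k - 2" for j
    unfolding re_col_zeta using that k by (intro cc_antimono) auto
  assume "j \<in> core_cols"
  then consider "j \<le> k - 2" | "4 * k + 1 - j \<le> k - 2" "j \<le> 4 * k + 1"
    using k by (force simp: core_cols_def)
  then show ?thesis
  proof cases
    case 1
    then show ?thesis by (rule low)
  next
    case 2
    then show ?thesis
      using low[OF 2(1)] col_zeta_reflect[OF 2(2)] by simp
  qed
qed

lemma re_col_zeta_far: "j \<in> far_cols \<Longrightarrow> Re (col_zeta j) \<le> - cc \<alpha> (2 * k - 3)"
proof -
  have bound: "- cc \<alpha> (2 * k - 3) = cc \<alpha> (2 * k + 5)"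
    using cc_reflect[of "2 * k - 3" \<alpha>] k by (simp add: algebra_simps)
  have low: "Re (col_zeta j) \<le> - cc \<alpha> (2 * k - 3)" if "k + 2 \<le> j" "j \<le> 2 * k" for j
    unfolding re_col_zeta bound using that by (intro cc_antimono) auto
  assume "j \<in> far_cols"
  then consider "k + 2 \<le> j" "j \<le> 2 * k" | "k + 2 \<le> 4 * k + 1 - j" "4 * k + 1 - j \<le> 2 * k" "j \<le> 4 * k + 1"
    using k by (force simp: far_cols_def)
  then show ?thesis
  proof cases
    case 1
    then show ?thesis by (rule low)
  next
    case 2
    then show ?thesis
      using low[OF 2(1,2)] col_zeta_reflect[OF 2(3)] by simp
  qed
qed

lemma sum_edge:
  "(\<Sum>j\<in>edge_cols. f j) = f (k - 1) + f k + f (k + 1) + f (3 * k) + f (3 * k + 1) + f (3 * k + 2)"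
proof -
  have "distinct [k - 1, k, k + 1, 3 * k, 3 * k + 1, 3 * k + 2]" using k by auto
  from sum.distinct_set_conv_list[OF this, of f] show ?thesis
    by (simp add: edge_cols_def add.assoc)
qed

lemma card_inter_edge:
  "card (T \<inter> edge_cols) = of_bool (k - 1 \<in> T) + of_bool (k \<in> T) + of_bool (k + 1 \<in> T)
     + of_bool (3 * k \<in> T) + of_bool (3 * k + 1 \<in> T) + of_bool (3 * k + 2 \<in> T)"
proof -
  have "card (T \<inter> edge_cols) = (\<Sum>j\<in>edge_cols. if j \<in> T then 1 else 0)"
    by (simp add: sum.If_cases Int_commute edge_cols_def)
  then show ?thesis unfolding sum_edge by simp
qed

lemma re_sum_inter_edge:
  "(\<Sum>j\<in>T \<inter> edge_cols. Re (col_zeta j)) = cc \<alpha> (2 * k - 1) *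
     (of_bool (k - 1 \<in> T) + of_bool (3 * k + 2 \<in> T) - of_bool (k + 1 \<in> T) - of_bool (3 * k \<in> T))"
proof -
  have "(\<Sum>j\<in>T \<inter> edge_cols. Re (col_zeta j)) = (\<Sum>j\<in>edge_cols. if j \<in> T then Re (col_zeta j) else 0)"
    by (simp add: sum.If_cases Int_commute edge_cols_def)
  then show ?thesis
    unfolding sum_edge col_zeta_values by (simp add: algebra_simps)
qed

lemma dominant_core_edge: "S \<in> dominant_sets \<Longrightarrow> core_cols \<subseteq> S \<and> S \<subseteq> core_cols \<union> edge_cols"
  unfolding dominant_sets_def lead_plus_def lead_minus_def second_plus_a_def second_plus_b_def
    second_minus_a_def second_minus_b_def
  by (elim insertE emptyE; simp add: edge_cols_def; blast)

lemma eq_dominant_of_edge_pattern: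
  assumes T: "core_cols \<subseteq> T" "T \<inter> far_cols = {}" "T \<subseteq> {0..<2 * \<alpha>}"
    and S: "S \<in> dominant_sets" and pattern: "edge_pattern T = edge_pattern S"
  shows "T = S"
proof -
  have S_props: "core_cols \<subseteq> S" "S \<subseteq> core_cols \<union> edge_cols"
    using dominant_core_edge[OF S] by auto
  have "x \<in> T \<longleftrightarrow> x \<in> S" if "x \<in> edge_cols" for x
    using that pattern unfolding edge_cols_def edge_pattern_def by auto
  moreover have "x \<in> T \<longleftrightarrow> x \<in> S" if "x \<notin> edge_cols" for x
    using that T S_props core_union core_disjoint by blast
  ultimately show ?thesis by blast
qed

lemma re_sum_le_gamma3:
  assumes T: "T \<subseteq> {0..<2 * \<alpha>}" "card T = \<alpha>" and not_dominant: "T \<notin> dominant_sets"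
  shows "(\<Sum>j\<in>T. Re (col_zeta j)) \<le> gamma3 k"
proof -
  define c where "c j = Re (col_zeta j)" for j
  define dl bt where "dl = cc \<alpha> (2 * k - 1)" and "bt = cc \<alpha> (2 * k - 3)"
  have bounds: "0 < dl" "dl < bt" "bt \<le> 2 * dl"
    using cc_bounds by (simp_all add: dl_def bt_def)
  have fin: "finite core_cols" "finite edge_cols" "finite far_cols"
    by (simp_all add: core_cols_def edge_cols_def far_cols_def)
  have gamma3: "gamma3 k = (\<Sum>j\<in>core_cols. c j) - bt + 2 * dl"
    using arg_cong[OF sum_core, of Re] by (simp add: c_def bt_def dl_def gamma3_def Re_sum)
  have split: "(\<Sum>j\<in>T. c j) = (\<Sum>j\<in>T \<inter> core_cols. c j) + (\<Sum>j\<in>T \<inter> edge_cols. c j) + (\<Sum>j\<in>T \<inter> far_cols. c j)"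
  proof -
    have parts: "(T \<inter> core_cols) \<union> ((T \<inter> edge_cols) \<union> (T \<inter> far_cols)) = T"
      using T(1) core_union by auto
    have "sum c ((T \<inter> core_cols) \<union> ((T \<inter> edge_cols) \<union> (T \<inter> far_cols)))
        = sum c (T \<inter> core_cols) + (sum c (T \<inter> edge_cols) + sum c (T \<inter> far_cols))"
      using fin core_disjoint by (subst sum.union_disjoint; auto intro: sum.union_disjoint)+
    then show ?thesis unfolding parts by (simp add: add.assoc)
  qed
  have edge_sum: "(\<Sum>j\<in>T \<inter> edge_cols. c j)
      = dl * (of_bool (k - 1 \<in> T) + of_bool (3 * k + 2 \<in> T) - of_bool (k + 1 \<in> T) - of_bool (3 * k \<in> T))"
    unfolding c_def dl_def by (rule re_sum_inter_edge)
  then have edge_le: "(\<Sum>j\<in>T \<inter> edge_cols. c j) \<le> 2 * dl"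
    using bounds by (simp add: of_bool_def)
  have far_le: "(\<Sum>j\<in>T \<inter> far_cols. c j) \<le> 0"
    using re_col_zeta_far bounds by (intro sum_nonpos) (fastforce simp: c_def bt_def)
  have core_pos: "bt \<le> c j" if "j \<in> core_cols" for j
    using re_col_zeta_core[OF that] by (simp add: c_def bt_def)
  consider (missing) "\<not> core_cols \<subseteq> T" | (far_cols) "T \<inter> far_cols \<noteq> {}" | (exact) "core_cols \<subseteq> T" "T \<inter> far_cols = {}"
    by blast
  then show ?thesis
  proof cases
    case missing
    then obtain j0 where j0: "j0 \<in> core_cols" "j0 \<notin> T" by blast
    have "(\<Sum>j\<in>T \<inter> core_cols. c j) \<le> (\<Sum>j\<in>core_cols - {j0}. c j)"
      using fin j0 core_pos bounds by (intro sum_mono2) (auto intro: order.trans[of 0 bt])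
    also have "\<dots> \<le> (\<Sum>j\<in>core_cols. c j) - bt"
      using fin j0 core_pos by (simp add: sum_diff1)
    finally show ?thesis
      unfolding c_def[symmetric] using split edge_le far_le gamma3 by linarith
  next
    case far_cols
    then obtain j0 where j0: "j0 \<in> T \<inter> far_cols" by blast
    have "c j0 \<le> - bt"
      using j0 re_col_zeta_far by (simp add: c_def bt_def)
    moreover have "(\<Sum>j\<in>T \<inter> far_cols - {j0}. c j) \<le> 0"
      using re_col_zeta_far bounds by (intro sum_nonpos) (fastforce simp: c_def bt_def)
    moreover have "(\<Sum>j\<in>T \<inter> far_cols. c j) = c j0 + (\<Sum>j\<in>T \<inter> far_cols - {j0}. c j)"
      using fin j0 by (simp add: sum.remove)
    ultimately have "(\<Sum>j\<in>T \<inter> far_cols. c j) \<le> - bt" by linarith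
    moreover have "(\<Sum>j\<in>T \<inter> core_cols. c j) \<le> (\<Sum>j\<in>core_cols. c j)"
      using fin core_pos bounds by (intro sum_mono2) (auto intro: order.trans[of 0 bt])
    ultimately show ?thesis
      unfolding c_def[symmetric] using split edge_le gamma3 by linarith
  next
    case exact
    have "core_cols \<union> (T \<inter> edge_cols) = T" using exact T(1) core_union by auto
    moreover have "card (core_cols \<union> (T \<inter> edge_cols)) = card core_cols + card (T \<inter> edge_cols)"
      using fin core_disjoint(1) by (intro card_Un_disjoint) auto
    ultimately have "card T = card core_cols + card (T \<inter> edge_cols)" by simp
    then have card3: "card (T \<inter> edge_cols) = 3" using T(2) card_core k by simp
    have "of_bool (k - 1 \<in> T) + of_bool (3 * k + 2 \<in> T) \<le> (of_bool (k + 1 \<in> T) + of_bool (3 * k \<in> T) :: nat)"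
    proof (rule disjE[OF three_of_six_cases[OF card3[unfolded card_inter_edge]]])
      assume "(k - 1 \<in> T, k \<in> T, k + 1 \<in> T, 3 * k \<in> T, 3 * k + 1 \<in> T, 3 * k + 2 \<in> T)
        \<in> {(True, True, False, False, False, True), (True, False, False, False, True, True),
          (True, False, True, False, False, True), (True, True, False, False, True, False),
          (True, False, False, True, False, True), (False, True, False, False, True, True)}"
      then have "edge_pattern T \<in> edge_pattern ` dominant_sets"
        unfolding edge_pattern_def[of T, symmetric] dominant_sets_def by (simp add: edge_patterns)
      then obtain S where "S \<in> dominant_sets" "edge_pattern T = edge_pattern S" by blast
      then show ?thesis
        using eq_dominant_of_edge_pattern[OF exact T(1)] not_dominant by blast
    qed
    then have "(\<Sum>j\<in>T \<inter> edge_cols. c j) \<le> 0"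
      unfolding edge_sum using bounds by (simp add: mult_le_0_iff of_bool_def split: if_splits)
    moreover have "T \<inter> core_cols = core_cols" "T \<inter> far_cols = {}" using exact by auto
    ultimately show ?thesis
      unfolding c_def[symmetric] using split gamma3 bounds by simp
  qed
qed

lemma dominant_part:
  defines "D \<equiv> root_minor \<alpha> lead_plus" and "s \<equiv> complex_of_real ((sin (pi / (2 * real \<alpha>)))\<^sup>2)"
  shows "(\<Sum>T\<in>dominant_sets. root_minor \<alpha> T * exp (of_real \<mu> * (\<Sum>j\<in>T. col_zeta j)))
    = (2 * \<i> * D) * of_real (exp (gamma1 k * \<mu>) * sin \<mu>)
      + (- 4 * \<i> * D / s) * of_real (exp (gamma2 k * \<mu>) * sin (ss \<alpha> (2 * k - 1) * \<mu>))"
proof -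
  have s: "s \<noteq> 0"
    unfolding s_def using sin_pi_div_pos[of \<alpha>] by simp
  have pair: "exp (of_real \<mu> * Complex a b) - exp (of_real \<mu> * Complex a (- b))
      = 2 * \<i> * of_real (exp (a * \<mu>) * sin (b * \<mu>))" for a b
    by (simp add: exp_eq_polar complex_eq_iff mult.commute)
  have minors: "root_minor \<alpha> lead_minus = - D"
    "root_minor \<alpha> second_plus_a = - D / s" "root_minor \<alpha> second_plus_b = - D / s"
    "root_minor \<alpha> second_minus_a = D / s" "root_minor \<alpha> second_minus_b = D / s"
    using dominant_minors s by (simp_all add: D_def s_def field_simps)
  have "(\<Sum>T\<in>dominant_sets. root_minor \<alpha> T * exp (of_real \<mu> * (\<Sum>j\<in>T. col_zeta j)))
    = D * (exp (of_real \<mu> * Complex (gamma1 k) 1) - exp (of_real \<mu> * Complex (gamma1 k) (- 1)))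
      - 2 * (D / s) * (exp (of_real \<mu> * Complex (gamma2 k) (ss \<alpha> (2 * k - 1)))
        - exp (of_real \<mu> * Complex (gamma2 k) (- ss \<alpha> (2 * k - 1))))"
  proof -
    have list: "dominant_sets = set [lead_plus, lead_minus, second_plus_a, second_plus_b, second_minus_a, second_minus_b]"
      by (simp add: dominant_sets_def)
    show ?thesis
      unfolding list sum.distinct_set_conv_list[OF dominant_distinct] list.map sum_list.Cons sum_list.Nil
        dominant_sums minors D_def[symmetric]
      by (simp add: algebra_simps)
  qed
  then show ?thesis
    unfolding pair by (simp add: algebra_simps)
qed

lemma lead_minor_nonzero: "root_minor \<alpha> lead_plus \<noteq> 0"
  using dominant_subsets by (intro root_minor_nonzero) (auto simp: dominant_sets_def column_sets_def)

lemma det_A_mat_decomposition: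
  defines "D \<equiv> root_minor \<alpha> lead_plus" and "s \<equiv> complex_of_real ((sin (pi / (2 * real \<alpha>)))\<^sup>2)"
  shows "det (A_mat \<alpha> \<mu>) = (2 * \<i> * D) * of_real (exp (gamma1 k * \<mu>) * sin \<mu>)
      + (- 4 * \<i> * D / s) * of_real (exp (gamma2 k * \<mu>) * sin (ss \<alpha> (2 * k - 1) * \<mu>))
      + (\<Sum>T\<in>column_sets \<alpha> - dominant_sets. root_minor \<alpha> T * exp (of_real \<mu> * (\<Sum>j\<in>T. col_zeta j)))"
proof -
  let ?f = "\<lambda>T. root_minor \<alpha> T * exp (of_real \<mu> * (\<Sum>j\<in>T. col_zeta j))"
  have "det (A_mat \<alpha> \<mu>) = sum ?f (column_sets \<alpha>)"
    unfolding det_A_mat col_zeta_def ..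
  also have "\<dots> = sum ?f dominant_sets + sum ?f (column_sets \<alpha> - dominant_sets)"
    using sum.subset_diff[OF dominant_subsets finite_column_sets] by (simp add: add.commute)
  also have "sum ?f dominant_sets = (2 * \<i> * D) * of_real (exp (gamma1 k * \<mu>) * sin \<mu>)
      + (- 4 * \<i> * D / s) * of_real (exp (gamma2 k * \<mu>) * sin (ss \<alpha> (2 * k - 1) * \<mu>))"
    unfolding D_def s_def by (rule dominant_part)
  finally show ?thesis .
qed

lemma remainder_bigo:
  "(\<lambda>\<mu>. \<Sum>T\<in>column_sets \<alpha> - dominant_sets. root_minor \<alpha> T * exp (of_real \<mu> * (\<Sum>j\<in>T. col_zeta j)))
     \<in> O[at_top](\<lambda>\<mu>. of_real (exp (gamma3 k * \<mu>)))"
  using re_sum_le_gamma3 by (intro big_sum_in_bigo exp_term_bigo) (auto simp: column_sets_def Re_sum)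

end

theorem theorem2p3:
  fixes k :: nat
  assumes "k \<ge> 2"
  defines "\<alpha> \<equiv> 2 * k + 1"
  shows "\<exists>K1 K2 :: complex. K1 \<noteq> 0 \<and> K2 \<noteq> 0 \<and>
     - K2 / K1 = of_real (2 / (sin (pi / (2 * real \<alpha>)))\<^sup>2) \<and>
     (\<lambda>\<mu>. det (A_mat \<alpha> \<mu>)
            - K1 * of_real (exp (gamma1 k * \<mu>) * sin \<mu>)
            - K2 * of_real (exp (gamma2 k * \<mu>) * sin (ss \<alpha> (2 * k - 1) * \<mu>)))
       \<in> bigo at_top (\<lambda>\<mu>. of_real (exp (gamma3 k * \<mu>)))"
proof -
  define D s where "D = root_minor \<alpha> (lead_plus k)" and "s = complex_of_real ((sin (pi / (2 * real \<alpha>)))\<^sup>2)"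
  define K1 K2 where "K1 = 2 * \<i> * D" and "K2 = - 4 * \<i> * D / s"
  have "D \<noteq> 0" using lead_minor_nonzero[OF assms(1)] by (simp add: D_def \<alpha>_def)
  moreover have "s \<noteq> 0" using sin_pi_div_pos[of \<alpha>] by (simp add: s_def \<alpha>_def)
  ultimately have K: "K1 \<noteq> 0" "K2 \<noteq> 0" "- K2 / K1 = of_real (2 / (sin (pi / (2 * real \<alpha>)))\<^sup>2)"
    by (simp_all add: K1_def K2_def s_def field_simps)
  have remainder: "(\<lambda>\<mu>. det (A_mat \<alpha> \<mu>) - K1 * of_real (exp (gamma1 k * \<mu>) * sin \<mu>)
      - K2 * of_real (exp (gamma2 k * \<mu>) * sin (ss \<alpha> (2 * k - 1) * \<mu>)))
    = (\<lambda>\<mu>. \<Sum>T\<in>column_sets \<alpha> - dominant_sets k. root_minor \<alpha> T * exp (of_real \<mu> * (\<Sum>j\<in>T. col_zeta k j)))"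
    unfolding K1_def K2_def D_def s_def \<alpha>_def det_A_mat_decomposition[OF assms(1)] by simp
  have "(\<lambda>\<mu>. det (A_mat \<alpha> \<mu>) - K1 * of_real (exp (gamma1 k * \<mu>) * sin \<mu>)
      - K2 * of_real (exp (gamma2 k * \<mu>) * sin (ss \<alpha> (2 * k - 1) * \<mu>)))
    \<in> O[at_top](\<lambda>\<mu>. of_real (exp (gamma3 k * \<mu>)))"
    unfolding remainder by (rule remainder_bigo[OF assms(1), folded \<alpha>_def])
  with K show ?thesis by blast
qed

end
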